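(* Let $\mathbb{C}$ be an almost exact Gumm category. Suppose given morphisms $\varphi\colon P\to Z$, $x\colon P\to X$, $f\colon X\to Y$, $y\colon Z\to Y$, $u\colon X\to U$, $v\colon Y\to V$, $w\colon U\to V$ with $fx=y\varphi$ and $wu=vf$, such that $\varphi,x,f,y$ are regular epimorphisms, the square $fx=y\varphi$ is a pushout, and the outer rectangle (the square with sides $\varphi$, $ux$, $vy$, $w$) is a pullback. Then both squares $fx=y\varphi$ and $wu=vf$ are pullbacks.
   Context: A regular category is a finitely complete category in which every kernel pair has a coequaliser and regular epimorphisms are stable under pullback. A regular category is almost exact if every regular epimorphism is an effective descent morphism; equivalently, for every regular epimorphism $f\colon X\to Y$ with kernel pair $R_f$ and every equivalence relation $R$ on an object $X'$ equipped with a morphism of relations $(g,h)\colon R\to R_f$ (with $g\colon X'\to X$) which is a discrete fibration (the squares formed by the projections are pullbacks), $R$ is an effective equivalence relation (a kernel pair). For equivalence relations $R,S$ on an object $X$, $R\square S$ denotes the largest double equivalence relation on $R$ and $S$: in generalized elements, the relation on $R$ consisting of pairs $((a,b),(c,d))$ with $(a,b),(c,d)\in R$, $(a,c)\in S$, $(b,d)\in S$, with projections $\pi_1,\pi_2$ to $R$. A finitely complete category is a Gumm category if for all equivalence relations $R,S,T$ on a same object with $R\wedge S\le T\le R$, the canonical inclusion $T\square S\to R\square S$ over $T\to R$ is a discrete fibration, i.e. the squares it forms with the projections $\pi_1$, $\pi_2$ are pullbacks. *)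

theory Defs
  imports Main
begin

text \<open>An abstract (arrows-only) category: arrows of type 'a, objects are the
identity arrows, Cmp C g f is the composite g after f (specified only for
composable pairs).\<close>

record 'a cat =
  Arr :: "'a set"
  Dom :: "'a \<Rightarrow> 'a"
  Cod :: "'a \<Rightarrow> 'a"
  Cmp :: "'a \<Rightarrow> 'a \<Rightarrow> 'a"

definition Ob :: "'a cat \<Rightarrow> 'a set" where
  "Ob C = {a \<in> Arr C. Dom C a = a \<and> Cod C a = a}"

definition hom :: "'a cat \<Rightarrow> 'a \<Rightarrow> 'a \<Rightarrow> 'a set" where
  "hom C a b = {f \<in> Arr C. Dom C f = a \<and> Cod C f = b}"

definition category :: "'a cat \<Rightarrow> bool" where
  "category C \<longleftrightarrow>
     (\<forall>f\<in>Arr C. Dom C f \<in> Ob C \<and> Cod C f \<in> Ob C) \<and>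
     (\<forall>f\<in>Arr C. \<forall>g\<in>Arr C. Cod C f = Dom C g \<longrightarrow>
         Cmp C g f \<in> hom C (Dom C f) (Cod C g)) \<and>
     (\<forall>f\<in>Arr C. Cmp C f (Dom C f) = f \<and> Cmp C (Cod C f) f = f) \<and>
     (\<forall>f\<in>Arr C. \<forall>g\<in>Arr C. \<forall>h\<in>Arr C. Cod C f = Dom C g \<and> Cod C g = Dom C h \<longrightarrow>
         Cmp C h (Cmp C g f) = Cmp C (Cmp C h g) f)"

definition is_pullback :: "'a cat \<Rightarrow> 'a \<Rightarrow> 'a \<Rightarrow> 'a \<Rightarrow> 'a \<Rightarrow> bool" where
  "is_pullback C f g p q \<longleftrightarrow>
     f \<in> Arr C \<and> g \<in> Arr C \<and> p \<in> Arr C \<and> q \<in> Arr C \<and>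
     Cod C f = Cod C g \<and> Cod C p = Dom C f \<and> Cod C q = Dom C g \<and> Dom C p = Dom C q \<and>
     Cmp C f p = Cmp C g q \<and>
     (\<forall>h\<in>Arr C. \<forall>k\<in>Arr C.
        Cod C h = Dom C f \<and> Cod C k = Dom C g \<and> Dom C h = Dom C k \<and> Cmp C f h = Cmp C g k
        \<longrightarrow> (\<exists>!t. t \<in> hom C (Dom C h) (Dom C p) \<and> Cmp C p t = h \<and> Cmp C q t = k))"

definition is_pushout :: "'a cat \<Rightarrow> 'a \<Rightarrow> 'a \<Rightarrow> 'a \<Rightarrow> 'a \<Rightarrow> bool" where
  "is_pushout C p q f g \<longleftrightarrow>
     f \<in> Arr C \<and> g \<in> Arr C \<and> p \<in> Arr C \<and> q \<in> Arr C \<and>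
     Cod C f = Cod C g \<and> Cod C p = Dom C f \<and> Cod C q = Dom C g \<and> Dom C p = Dom C q \<and>
     Cmp C f p = Cmp C g q \<and>
     (\<forall>h\<in>Arr C. \<forall>k\<in>Arr C.
        Dom C h = Cod C p \<and> Dom C k = Cod C q \<and> Cod C h = Cod C k \<and> Cmp C h p = Cmp C k q
        \<longrightarrow> (\<exists>!t. t \<in> hom C (Cod C f) (Cod C h) \<and> Cmp C t f = h \<and> Cmp C t g = k))"

definition coequalizer :: "'a cat \<Rightarrow> 'a \<Rightarrow> 'a \<Rightarrow> 'a \<Rightarrow> bool" where
  "coequalizer C a b e \<longleftrightarrow>
     a \<in> Arr C \<and> b \<in> Arr C \<and> e \<in> Arr C \<and>
     Dom C a = Dom C b \<and> Cod C a = Cod C b \<and> Dom C e = Cod C a \<and>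
     Cmp C e a = Cmp C e b \<and>
     (\<forall>h\<in>Arr C. Dom C h = Cod C a \<and> Cmp C h a = Cmp C h b
        \<longrightarrow> (\<exists>!t. t \<in> hom C (Cod C e) (Cod C h) \<and> Cmp C t e = h))"

definition regular_epi :: "'a cat \<Rightarrow> 'a \<Rightarrow> bool" where
  "regular_epi C e \<longleftrightarrow> e \<in> Arr C \<and> (\<exists>a b. coequalizer C a b e)"

definition kernel_pair :: "'a cat \<Rightarrow> 'a \<Rightarrow> 'a \<Rightarrow> 'a \<Rightarrow> bool" where
  "kernel_pair C k1 k2 f \<longleftrightarrow> is_pullback C f f k1 k2"

definition finitely_complete :: "'a cat \<Rightarrow> bool" where
  "finitely_complete C \<longleftrightarrow>
     category C \<and>
     (\<exists>T\<in>Ob C. \<forall>X\<in>Ob C. \<exists>!h. h \<in> hom C X T) \<and>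
     (\<forall>f\<in>Arr C. \<forall>g\<in>Arr C. Cod C f = Cod C g \<longrightarrow> (\<exists>p q. is_pullback C f g p q))"

definition regular :: "'a cat \<Rightarrow> bool" where
  "regular C \<longleftrightarrow>
     finitely_complete C \<and>
     (\<forall>f k1 k2. kernel_pair C k1 k2 f \<longrightarrow> (\<exists>e. coequalizer C k1 k2 e)) \<and>
     (\<forall>f g p q. is_pullback C f g p q \<and> regular_epi C f \<longrightarrow> regular_epi C q)"

text \<open>Relations as spans (r1, r2): R \<rightarrow> X; membership of a pair of generalized
elements x, y: T \<rightarrow> X.\<close>
definition rel_mem :: "'a cat \<Rightarrow> 'a \<Rightarrow> 'a \<Rightarrow> 'a \<Rightarrow> 'a \<Rightarrow> bool" where
  "rel_mem C r1 r2 x y \<longleftrightarrow>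
     (\<exists>c\<in>Arr C. Cod C c = Dom C r1 \<and> Cmp C r1 c = x \<and> Cmp C r2 c = y)"

definition gen_pair :: "'a cat \<Rightarrow> 'a \<Rightarrow> 'a \<Rightarrow> 'a \<Rightarrow> bool" where
  "gen_pair C X x y \<longleftrightarrow> x \<in> Arr C \<and> y \<in> Arr C \<and> Cod C x = X \<and> Cod C y = X \<and> Dom C x = Dom C y"

definition equiv_rel :: "'a cat \<Rightarrow> 'a \<Rightarrow> 'a \<Rightarrow> bool" where
  "equiv_rel C r1 r2 \<longleftrightarrow>
     r1 \<in> Arr C \<and> r2 \<in> Arr C \<and> Dom C r1 = Dom C r2 \<and> Cod C r1 = Cod C r2 \<and>
     (\<forall>a b. gen_pair C (Dom C r1) a b \<and> Cmp C r1 a = Cmp C r1 b \<and> Cmp C r2 a = Cmp C r2 b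
        \<longrightarrow> a = b) \<and>
     (\<forall>x\<in>Arr C. Cod C x = Cod C r1 \<longrightarrow> rel_mem C r1 r2 x x) \<and>
     (\<forall>x y. gen_pair C (Cod C r1) x y \<and> rel_mem C r1 r2 x y \<longrightarrow> rel_mem C r1 r2 y x) \<and>
     (\<forall>x y z. gen_pair C (Cod C r1) x y \<and> gen_pair C (Cod C r1) y z \<and>
        rel_mem C r1 r2 x y \<and> rel_mem C r1 r2 y z \<longrightarrow> rel_mem C r1 r2 x z)"

definition effective :: "'a cat \<Rightarrow> 'a \<Rightarrow> 'a \<Rightarrow> bool" where
  "effective C r1 r2 \<longleftrightarrow> (\<exists>f. kernel_pair C r1 r2 f)"

text \<open>The morphism of relations (g, h): (r1, r2) \<rightarrow> (s1, s2) (g on the base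
objects, h on the relation objects) is a discrete fibration.\<close>
definition discrete_fibration :: "'a cat \<Rightarrow> 'a \<Rightarrow> 'a \<Rightarrow> 'a \<Rightarrow> 'a \<Rightarrow> 'a \<Rightarrow> 'a \<Rightarrow> bool" where
  "discrete_fibration C r1 r2 s1 s2 g h \<longleftrightarrow>
     g \<in> hom C (Cod C r1) (Cod C s1) \<and> h \<in> hom C (Dom C r1) (Dom C s1) \<and>
     Cmp C s1 h = Cmp C g r1 \<and> Cmp C s2 h = Cmp C g r2 \<and>
     is_pullback C s1 g h r1 \<and> is_pullback C s2 g h r2"

definition almost_exact :: "'a cat \<Rightarrow> bool" where
  "almost_exact C \<longleftrightarrow>
     regular C \<and>
     (\<forall>f k1 k2 r1 r2 g h.
        regular_epi C f \<and> kernel_pair C k1 k2 f \<and> equiv_rel C r1 r2 \<and>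
        discrete_fibration C r1 r2 k1 k2 g h \<longrightarrow> effective C r1 r2)"

text \<open>(p1, p2): D \<rightarrow> R exhibit D as R\<box>S for relations R = (r1, r2), S = (s1, s2)
on the same object: generalized elements of D are exactly pairs ((a,b),(c,d))
of elements of R with (a,c) \<in> S and (b,d) \<in> S.\<close>
definition is_dbl :: "'a cat \<Rightarrow> 'a \<Rightarrow> 'a \<Rightarrow> 'a \<Rightarrow> 'a \<Rightarrow> 'a \<Rightarrow> 'a \<Rightarrow> bool" where
  "is_dbl C r1 r2 s1 s2 p1 p2 \<longleftrightarrow>
     p1 \<in> hom C (Dom C p1) (Dom C r1) \<and> p2 \<in> hom C (Dom C p1) (Dom C r1) \<and>
     (\<forall>t\<in>Arr C. Cod C t = Dom C p1 \<longrightarrow>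
        rel_mem C s1 s2 (Cmp C r1 (Cmp C p1 t)) (Cmp C r1 (Cmp C p2 t)) \<and>
        rel_mem C s1 s2 (Cmp C r2 (Cmp C p1 t)) (Cmp C r2 (Cmp C p2 t))) \<and>
     (\<forall>a b. gen_pair C (Dom C r1) a b \<and>
        rel_mem C s1 s2 (Cmp C r1 a) (Cmp C r1 b) \<and> rel_mem C s1 s2 (Cmp C r2 a) (Cmp C r2 b)
        \<longrightarrow> (\<exists>!t. t \<in> hom C (Dom C a) (Dom C p1) \<and> Cmp C p1 t = a \<and> Cmp C p2 t = b))"

definition gumm :: "'a cat \<Rightarrow> bool" where
  "gumm C \<longleftrightarrow>
     finitely_complete C \<and>
     (\<forall>r1 r2 s1 s2 t1 t2 \<iota> pR1 pR2 pT1 pT2 j.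
        equiv_rel C r1 r2 \<and> equiv_rel C s1 s2 \<and> equiv_rel C t1 t2 \<and>
        Cod C s1 = Cod C r1 \<and> Cod C t1 = Cod C r1 \<and>
        (\<forall>x y. gen_pair C (Cod C r1) x y \<and> rel_mem C r1 r2 x y \<and> rel_mem C s1 s2 x y
           \<longrightarrow> rel_mem C t1 t2 x y) \<and>
        (\<forall>x y. gen_pair C (Cod C r1) x y \<and> rel_mem C t1 t2 x y \<longrightarrow> rel_mem C r1 r2 x y) \<and>
        \<iota> \<in> hom C (Dom C t1) (Dom C r1) \<and> Cmp C r1 \<iota> = t1 \<and> Cmp C r2 \<iota> = t2 \<and>
        is_dbl C r1 r2 s1 s2 pR1 pR2 \<and> is_dbl C t1 t2 s1 s2 pT1 pT2 \<and>
        j \<in> hom C (Dom C pT1) (Dom C pR1) \<and>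
        Cmp C pR1 j = Cmp C \<iota> pT1 \<and> Cmp C pR2 j = Cmp C \<iota> pT2
        \<longrightarrow> is_pullback C pR1 \<iota> j pT1 \<and> is_pullback C pR2 \<iota> j pT2)"

end

theory Submission
  imports Defs
begin

text \<open>
  The heart of the proof is that \<open>f\<close> and \<open>u\<close> are jointly monic: both squares are then
  pullbacks by a chase through the outer pullback, for the right-hand square after covering by
  the regular epimorphism \<open>y\<close>.

  For joint monicity let \<open>N = X \<times>\<^sub>U P\<close> be the object of pairs \<open>(a, p)\<close> with
  \<open>u a = u x p\<close>, and relate \<open>(a, p)\<close> to \<open>(x s, p')\<close> whenever \<open>v y \<phi> p = v y \<phi> p'\<close> and
  \<open>(u x s, \<phi> s) = (u x p', \<phi> q)\<close> for some \<open>q\<close> with \<open>x q = a\<close>. The shifting property of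
  Gumm categories, applied to the kernel pairs of \<open>x\<close>, \<open>u x\<close> and \<open>\<phi>\<close>, shows that \<open>x s\<close> does
  not depend on the choice of \<open>q\<close>. The resulting relation \<open>\<Lambda>\<close> on \<open>N\<close> is an equivalence
  relation and a discrete fibration over the kernel pair of \<open>v y \<phi>\<close>, so by almost exactness it
  is the kernel pair of some \<open>H\<close>. Restricted along \<open>p \<mapsto> (x p, p)\<close>, \<open>H\<close> coequalises the kernel
  pairs of \<open>x\<close> and of \<open>\<phi>\<close>, hence factors through the pushout \<open>Y\<close>. Consequently, if
  \<open>f a = f a'\<close>, \<open>u a = u a'\<close> and \<open>x p = a\<close> (after covering by a regular epimorphism), then
  \<open>(a, p)\<close> and \<open>(a', p)\<close> have the same image under \<open>H\<close>; being \<open>\<Lambda>\<close>-related, they satisfy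
  \<open>a' = x p = a\<close>.
\<close>

section \<open>Limits in an abstract category\<close>

locale abstract_category =
  fixes C :: "'a cat"
  assumes category: "category C"
begin

abbreviation comp (infixr "\<cdot>" 55) where "g \<cdot> f \<equiv> Cmp C g f"
abbreviation arr where "arr f \<equiv> f \<in> Arr C"

lemma arr_comp [simp]: "arr f \<Longrightarrow> arr g \<Longrightarrow> Cod C f = Dom C g \<Longrightarrow> arr (g \<cdot> f)"
  using category unfolding category_def hom_def by blast

lemma dom_comp [simp]: "arr f \<Longrightarrow> arr g \<Longrightarrow> Cod C f = Dom C g \<Longrightarrow> Dom C (g \<cdot> f) = Dom C f"
  using category unfolding category_def hom_def by blast

lemma cod_comp [simp]: "arr f \<Longrightarrow> arr g \<Longrightarrow> Cod C f = Dom C g \<Longrightarrow> Cod C (g \<cdot> f) = Cod C g"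
  using category unfolding category_def hom_def by blast

lemma comp_assoc [simp]:
  "arr f \<Longrightarrow> arr g \<Longrightarrow> arr h \<Longrightarrow> Cod C f = Dom C g \<Longrightarrow> Cod C g = Dom C h \<Longrightarrow>
    (h \<cdot> g) \<cdot> f = h \<cdot> (g \<cdot> f)"
  using category unfolding category_def by metis

lemma comp_arr_dom [simp]: "arr f \<Longrightarrow> f \<cdot> Dom C f = f"
  using category unfolding category_def by blast

lemma comp_cod_arr [simp]: "arr f \<Longrightarrow> Cod C f \<cdot> f = f"
  using category unfolding category_def by blast

lemma arr_dom [simp]: "arr f \<Longrightarrow> arr (Dom C f)"
  and arr_cod [simp]: "arr f \<Longrightarrow> arr (Cod C f)"
  and dom_dom [simp]: "arr f \<Longrightarrow> Dom C (Dom C f) = Dom C f"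
  and cod_dom [simp]: "arr f \<Longrightarrow> Cod C (Dom C f) = Dom C f"
  and dom_cod [simp]: "arr f \<Longrightarrow> Dom C (Cod C f) = Cod C f"
  and cod_cod [simp]: "arr f \<Longrightarrow> Cod C (Cod C f) = Cod C f"
  using category unfolding category_def Ob_def by blast+

lemma comp_eq_extend:
  assumes "a \<cdot> b = c \<cdot> d" "arr a" "arr b" "arr c" "arr d" "arr t"
    "Cod C b = Dom C a" "Cod C d = Dom C c" "Cod C t = Dom C b" "Dom C b = Dom C d"
  shows "a \<cdot> (b \<cdot> t) = c \<cdot> (d \<cdot> t)"
  using assms by (metis comp_assoc)

lemma comp_eq_extend':
  assumes "a \<cdot> b = c" "arr a" "arr b" "arr t" "Cod C b = Dom C a" "Cod C t = Dom C b"
  shows "a \<cdot> (b \<cdot> t) = c \<cdot> t"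
  using assms by (metis comp_assoc)

lemma pullbackD:
  assumes "is_pullback C f g p q"
  shows "arr f" "arr g" "arr p" "arr q" "Cod C f = Cod C g" "Cod C p = Dom C f"
    "Cod C q = Dom C g" "Dom C p = Dom C q" "f \<cdot> p = g \<cdot> q"
  using assms unfolding is_pullback_def by auto

lemma pullback_lift_unique:
  assumes "is_pullback C f g p q" "arr h" "arr k" "Cod C h = Dom C f"
    "Cod C k = Dom C g" "Dom C h = Dom C k" "f \<cdot> h = g \<cdot> k"
  shows "\<exists>!t. t \<in> hom C (Dom C h) (Dom C p) \<and> p \<cdot> t = h \<and> q \<cdot> t = k"
  using assms unfolding is_pullback_def by blast

lemma pullback_liftE:
  assumes "is_pullback C f g p q" "arr h" "arr k" "Cod C h = Dom C f"
    "Cod C k = Dom C g" "Dom C h = Dom C k" "f \<cdot> h = g \<cdot> k"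
  obtains t where "arr t" "Dom C t = Dom C h" "Cod C t = Dom C p" "p \<cdot> t = h" "q \<cdot> t = k"
  using pullback_lift_unique[OF assms] unfolding hom_def by blast

lemma pullback_comm:
  assumes "is_pullback C f g p q" "arr t" "Cod C t = Dom C p"
  shows "f \<cdot> (p \<cdot> t) = g \<cdot> (q \<cdot> t)"
  using pullbackD[OF assms(1)] assms(2,3) by (intro comp_eq_extend) simp_all

lemma pullback_jointly_monic:
  assumes "is_pullback C f g p q" "arr t" "arr t'" "Cod C t = Dom C p"
    "Cod C t' = Dom C p" "Dom C t = Dom C t'" "p \<cdot> t = p \<cdot> t'" "q \<cdot> t = q \<cdot> t'"
  shows "t = t'"
proof -
  note D = pullbackD[OF assms(1)]
  have "\<exists>!s. s \<in> hom C (Dom C (p \<cdot> t)) (Dom C p) \<and> p \<cdot> s = p \<cdot> t \<and> q \<cdot> s = q \<cdot> t"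
    by (rule pullback_lift_unique[OF assms(1)]) (use D assms pullback_comm[OF assms(1)] in auto)
  then show ?thesis
    using D assms unfolding hom_def by auto
qed

lemma pullbackI:
  assumes "arr f" "arr g" "arr p" "arr q" "Cod C f = Cod C g" "Cod C p = Dom C f"
    "Cod C q = Dom C g" "Dom C p = Dom C q" "f \<cdot> p = g \<cdot> q"
    and "\<And>h k. arr h \<Longrightarrow> arr k \<Longrightarrow> Cod C h = Dom C f \<Longrightarrow> Cod C k = Dom C g \<Longrightarrow>
      Dom C h = Dom C k \<Longrightarrow> f \<cdot> h = g \<cdot> k \<Longrightarrow>
      \<exists>t. arr t \<and> Dom C t = Dom C h \<and> Cod C t = Dom C p \<and> p \<cdot> t = h \<and> q \<cdot> t = k"
    and "\<And>t t'. arr t \<Longrightarrow> arr t' \<Longrightarrow> Cod C t = Dom C p \<Longrightarrow> Cod C t' = Dom C p \<Longrightarrow>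
      Dom C t = Dom C t' \<Longrightarrow> p \<cdot> t = p \<cdot> t' \<Longrightarrow> q \<cdot> t = q \<cdot> t' \<Longrightarrow> t = t'"
  shows "is_pullback C f g p q"
  unfolding is_pullback_def
proof (intro conjI assms(1-9) ballI impI)
  fix h k assume "arr h" "arr k"
    and hk: "Cod C h = Dom C f \<and> Cod C k = Dom C g \<and> Dom C h = Dom C k \<and> f \<cdot> h = g \<cdot> k"
  then obtain t where t: "arr t" "Dom C t = Dom C h" "Cod C t = Dom C p" "p \<cdot> t = h" "q \<cdot> t = k"
    using assms(10) by blast
  show "\<exists>!t. t \<in> hom C (Dom C h) (Dom C p) \<and> p \<cdot> t = h \<and> q \<cdot> t = k"
  proof (rule ex1I)
    show "t \<in> hom C (Dom C h) (Dom C p) \<and> p \<cdot> t = h \<and> q \<cdot> t = k"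
      using t unfolding hom_def by simp
  next
    fix t' assume "t' \<in> hom C (Dom C h) (Dom C p) \<and> p \<cdot> t' = h \<and> q \<cdot> t' = k"
    then show "t' = t"
      using t assms(11)[of t' t] unfolding hom_def by simp
  qed
qed

lemma coequalizerD:
  assumes "coequalizer C a b e"
  shows "arr a" "arr b" "arr e" "Dom C a = Dom C b" "Cod C a = Cod C b" "Dom C e = Cod C a"
    "e \<cdot> a = e \<cdot> b"
  using assms unfolding coequalizer_def by auto

lemma coequalizer_factorE:
  assumes "coequalizer C a b e" "arr h" "Dom C h = Cod C a" "h \<cdot> a = h \<cdot> b"
  obtains t where "arr t" "Dom C t = Cod C e" "Cod C t = Cod C h" "t \<cdot> e = h"
  using assms unfolding coequalizer_def hom_def by blast

lemma coequalizer_factor_unique: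
  assumes "coequalizer C a b e" "arr h" "Dom C h = Cod C a" "h \<cdot> a = h \<cdot> b"
  shows "\<exists>!t. t \<in> hom C (Cod C e) (Cod C h) \<and> t \<cdot> e = h"
  using assms unfolding coequalizer_def by blast

lemma regular_epi_arr: "regular_epi C e \<Longrightarrow> arr e"
  unfolding regular_epi_def by auto

lemma regular_epi_cancel:
  assumes "regular_epi C e" "arr s" "arr s'" "Dom C s = Cod C e" "Dom C s' = Cod C e"
    "Cod C s = Cod C s'" "s \<cdot> e = s' \<cdot> e"
  shows "s = s'"
proof -
  obtain a b where coeq: "coequalizer C a b e"
    using assms(1) unfolding regular_epi_def by blast
  note D = coequalizerD[OF coeq]
  have "(s \<cdot> e) \<cdot> a = (s \<cdot> e) \<cdot> b"
    using D assms by (metis comp_assoc)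
  then have "\<exists>!t. t \<in> hom C (Cod C e) (Cod C (s \<cdot> e)) \<and> t \<cdot> e = s \<cdot> e"
    by (intro coequalizer_factor_unique[OF coeq]) (use D assms in simp_all)
  then show ?thesis
    using D assms unfolding hom_def by auto
qed

lemma regular_epi_descendE:
  assumes "regular_epi C e" "arr h" "Dom C h = Dom C e"
    and "\<And>a b. arr a \<Longrightarrow> arr b \<Longrightarrow> Cod C a = Dom C e \<Longrightarrow> Cod C b = Dom C e \<Longrightarrow>
      Dom C a = Dom C b \<Longrightarrow> e \<cdot> a = e \<cdot> b \<Longrightarrow> h \<cdot> a = h \<cdot> b"
  obtains t where "arr t" "Dom C t = Cod C e" "Cod C t = Cod C h" "t \<cdot> e = h"
proof -
  obtain a b where coeq: "coequalizer C a b e"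
    using assms(1) unfolding regular_epi_def by blast
  note D = coequalizerD[OF coeq]
  have "h \<cdot> a = h \<cdot> b"
    by (rule assms(4)) (use D in simp_all)
  then show ?thesis
    using coequalizer_factorE[OF coeq assms(2)] D(6) assms(3) that by metis
qed

lemma pushout_factorE:
  assumes "is_pushout C p q f g" "arr h" "arr k" "Dom C h = Cod C p" "Dom C k = Cod C q"
    "Cod C h = Cod C k" "h \<cdot> p = k \<cdot> q"
  obtains t where "arr t" "Dom C t = Cod C f" "Cod C t = Cod C h" "t \<cdot> f = h" "t \<cdot> g = k"
  using assms unfolding is_pushout_def hom_def by blast

lemma kernel_pair_rel_memD:
  assumes "is_pullback C f f k1 k2" "rel_mem C k1 k2 a b"
  shows "f \<cdot> a = f \<cdot> b"
  using assms pullback_comm[OF assms(1)] unfolding rel_mem_def by auto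

lemma kernel_pair_rel_memI:
  assumes "is_pullback C f f k1 k2" "arr a" "arr b" "Cod C a = Dom C f"
    "Cod C b = Dom C f" "Dom C a = Dom C b" "f \<cdot> a = f \<cdot> b"
  shows "rel_mem C k1 k2 a b"
  using pullback_liftE[OF assms] unfolding rel_mem_def by metis

lemma kernel_pair_equiv_rel:
  assumes kp: "is_pullback C f f k1 k2"
  shows "equiv_rel C k1 k2"
proof -
  note D = pullbackD[OF kp]
  note memD = kernel_pair_rel_memD[OF kp] and memI = kernel_pair_rel_memI[OF kp]
  have jm: "a = b" if "gen_pair C (Dom C k1) a b" "k1 \<cdot> a = k1 \<cdot> b" "k2 \<cdot> a = k2 \<cdot> b" for a b
    using that pullback_jointly_monic[OF kp] unfolding gen_pair_def by auto
  have refl: "rel_mem C k1 k2 a a" if "arr a" "Cod C a = Cod C k1" for a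
    using that D by (intro memI) auto
  have sym: "rel_mem C k1 k2 b a" if "gen_pair C (Cod C k1) a b" "rel_mem C k1 k2 a b" for a b
    using that D memD[OF that(2)] unfolding gen_pair_def by (intro memI) auto
  have trans: "rel_mem C k1 k2 a c"
    if "gen_pair C (Cod C k1) a b" "gen_pair C (Cod C k1) b c"
      "rel_mem C k1 k2 a b" "rel_mem C k1 k2 b c" for a b c
    using that D memD[OF that(3)] memD[OF that(4)] unfolding gen_pair_def by (intro memI) auto
  show ?thesis
    unfolding equiv_rel_def using D(3,4,6,7,8) by (intro conjI allI ballI impI) (use jm refl sym trans in auto)
qed

lemma kernel_pair_of_coequalizer:
  assumes kp: "is_pullback C \<psi> \<psi> f1 f2" and coeq: "coequalizer C f1 f2 c"
  shows "is_pullback C c c f1 f2"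
proof -
  note DF = pullbackD[OF kp] and DC = coequalizerD[OF coeq]
  obtain m where m: "arr m" "Dom C m = Cod C c" "Cod C m = Cod C \<psi>" "m \<cdot> c = \<psi>"
    by (rule coequalizer_factorE[OF coeq DF(1)]) (use DF in simp_all)
  show ?thesis
  proof (rule pullbackI)
    fix h k assume hk: "arr h" "arr k" "Cod C h = Dom C c" "Cod C k = Dom C c" "Dom C h = Dom C k"
      "c \<cdot> h = c \<cdot> k"
    have "\<psi> \<cdot> h = \<psi> \<cdot> k"
      using comp_eq_extend'[OF m(4), of h] comp_eq_extend'[OF m(4), of k] hk m DC by simp
    then obtain t where "arr t" "Dom C t = Dom C h" "Cod C t = Dom C f1" "f1 \<cdot> t = h" "f2 \<cdot> t = k"
      by (rule pullback_liftE[OF kp hk(1,2) _ _ hk(5), rotated 2]) (use hk DF DC in simp_all)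
    then show "\<exists>t. arr t \<and> Dom C t = Dom C h \<and> Cod C t = Dom C f1 \<and> f1 \<cdot> t = h \<and> f2 \<cdot> t = k"
      by blast
  next
    fix t t' assume "arr t" "arr t'" "Cod C t = Dom C f1" "Cod C t' = Dom C f1" "Dom C t = Dom C t'"
      "f1 \<cdot> t = f1 \<cdot> t'" "f2 \<cdot> t = f2 \<cdot> t'"
    then show "t = t'"
      by (rule pullback_jointly_monic[OF kp])
  qed (use DF DC in simp_all)
qed

lemma is_dbl_kernel_pair:
  assumes S: "is_pullback C c c s1 s2"
    and R: "arr r1" "arr r2" "Dom C r1 = Dom C r2" "Cod C r1 = Dom C c" "Cod C r2 = Dom C c"
    and J: "is_pullback C a b j1 j2" "Cod C j1 = Cod C c" "Cod C j2 = Cod C c"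
    and m: "arr m" "Dom C m = Dom C r1" "Cod C m = Dom C j1" "j1 \<cdot> m = c \<cdot> r1" "j2 \<cdot> m = c \<cdot> r2"
    and P: "is_pullback C m m p1 p2"
  shows "is_dbl C r1 r2 s1 s2 p1 p2"
proof -
  note DS = pullbackD[OF S] and DJ = pullbackD[OF J(1)] and DP = pullbackD[OF P]
  have m1: "j1 \<cdot> (m \<cdot> z) = c \<cdot> (r1 \<cdot> z)" if "arr z" "Cod C z = Dom C r1" for z
    by (rule comp_eq_extend[OF m(4)]) (use that R J m DJ DS in simp_all)
  have m2: "j2 \<cdot> (m \<cdot> z) = c \<cdot> (r2 \<cdot> z)" if "arr z" "Cod C z = Dom C r1" for z
    by (rule comp_eq_extend[OF m(5)]) (use that R J m DJ DS in simp_all)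
  have "rel_mem C s1 s2 (r1 \<cdot> (p1 \<cdot> t)) (r1 \<cdot> (p2 \<cdot> t))
      \<and> rel_mem C s1 s2 (r2 \<cdot> (p1 \<cdot> t)) (r2 \<cdot> (p2 \<cdot> t))"
    if t: "arr t" "Cod C t = Dom C p1" for t
  proof -
    have mm: "m \<cdot> (p1 \<cdot> t) = m \<cdot> (p2 \<cdot> t)"
      by (rule pullback_comm[OF P t])
    have "c \<cdot> (r1 \<cdot> (p1 \<cdot> t)) = c \<cdot> (r1 \<cdot> (p2 \<cdot> t))" "c \<cdot> (r2 \<cdot> (p1 \<cdot> t)) = c \<cdot> (r2 \<cdot> (p2 \<cdot> t))"
      using m1[of "p1 \<cdot> t"] m1[of "p2 \<cdot> t"] m2[of "p1 \<cdot> t"] m2[of "p2 \<cdot> t"] mm t DP m by simp_all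
    then show ?thesis
      using t DP m R by (intro conjI kernel_pair_rel_memI[OF S]) simp_all
  qed
  moreover have "\<exists>!t. t \<in> hom C (Dom C z) (Dom C p1) \<and> p1 \<cdot> t = z \<and> p2 \<cdot> t = z'"
    if zz': "gen_pair C (Dom C r1) z z'" "rel_mem C s1 s2 (r1 \<cdot> z) (r1 \<cdot> z')"
      "rel_mem C s1 s2 (r2 \<cdot> z) (r2 \<cdot> z')" for z z'
  proof -
    have g: "arr z" "arr z'" "Cod C z = Dom C r1" "Cod C z' = Dom C r1" "Dom C z = Dom C z'"
      using zz'(1) unfolding gen_pair_def by simp_all
    have "c \<cdot> (r1 \<cdot> z) = c \<cdot> (r1 \<cdot> z')" "c \<cdot> (r2 \<cdot> z) = c \<cdot> (r2 \<cdot> z')"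
      using zz'(2,3) kernel_pair_rel_memD[OF S] by blast+
    then have "j1 \<cdot> (m \<cdot> z) = j1 \<cdot> (m \<cdot> z')" "j2 \<cdot> (m \<cdot> z) = j2 \<cdot> (m \<cdot> z')"
      using m1 m2 g by simp_all
    then have "m \<cdot> z = m \<cdot> z'"
      by (rule pullback_jointly_monic[OF J(1), rotated 5]) (use g m in simp_all)
    then show ?thesis
      by (intro pullback_lift_unique[OF P]) (use g m in simp_all)
  qed
  moreover have "p1 \<in> hom C (Dom C p1) (Dom C r1)" "p2 \<in> hom C (Dom C p1) (Dom C r1)"
    using DP m unfolding hom_def by simp_all
  ultimately show ?thesis
    unfolding is_dbl_def by blast
qed

lemma is_dblD:
  assumes "is_dbl C r1 r2 s1 s2 p1 p2"
  shows "arr p1" "arr p2" "Cod C p1 = Dom C r1" "Cod C p2 = Dom C r1" "Dom C p2 = Dom C p1"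
  using assms unfolding is_dbl_def hom_def by auto

lemma dbl_kernel_pair_relD:
  assumes "is_dbl C r1 r2 s1 s2 p1 p2" "is_pullback C c c s1 s2" "arr t" "Cod C t = Dom C p1"
  shows "c \<cdot> (r1 \<cdot> (p1 \<cdot> t)) = c \<cdot> (r1 \<cdot> (p2 \<cdot> t))" "c \<cdot> (r2 \<cdot> (p1 \<cdot> t)) = c \<cdot> (r2 \<cdot> (p2 \<cdot> t))"
proof -
  have "rel_mem C s1 s2 (r1 \<cdot> (p1 \<cdot> t)) (r1 \<cdot> (p2 \<cdot> t))"
    "rel_mem C s1 s2 (r2 \<cdot> (p1 \<cdot> t)) (r2 \<cdot> (p2 \<cdot> t))"
    using assms(1,3,4) unfolding is_dbl_def by blast+
  then show "c \<cdot> (r1 \<cdot> (p1 \<cdot> t)) = c \<cdot> (r1 \<cdot> (p2 \<cdot> t))" "c \<cdot> (r2 \<cdot> (p1 \<cdot> t)) = c \<cdot> (r2 \<cdot> (p2 \<cdot> t))"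
    by (simp_all add: kernel_pair_rel_memD[OF assms(2)])
qed

lemma dbl_kernel_pair_comm:
  assumes "is_dbl C r1 r2 s1 s2 p1 p2" "is_pullback C c c s1 s2"
  shows "c \<cdot> (r1 \<cdot> p1) = c \<cdot> (r1 \<cdot> p2)" "c \<cdot> (r2 \<cdot> p1) = c \<cdot> (r2 \<cdot> p2)"
proof -
  note D = is_dblD[OF assms(1)]
  have "p1 \<cdot> Dom C p1 = p1" "p2 \<cdot> Dom C p1 = p2"
    using D comp_arr_dom by metis+
  then show "c \<cdot> (r1 \<cdot> p1) = c \<cdot> (r1 \<cdot> p2)" "c \<cdot> (r2 \<cdot> p1) = c \<cdot> (r2 \<cdot> p2)"
    using dbl_kernel_pair_relD[OF assms, of "Dom C p1"] D by simp_all
qed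

lemma dbl_kernel_pair_liftE:
  assumes "is_dbl C r1 r2 s1 s2 p1 p2" "is_pullback C c c s1 s2"
    and "arr z" "arr z'" "Cod C z = Dom C r1" "Cod C z' = Dom C r1" "Dom C z = Dom C z'"
    and "c \<cdot> (r1 \<cdot> z) = c \<cdot> (r1 \<cdot> z')" "c \<cdot> (r2 \<cdot> z) = c \<cdot> (r2 \<cdot> z')"
    and R: "arr r1" "arr r2" "Dom C r1 = Dom C r2" "Cod C r1 = Dom C c" "Cod C r2 = Dom C c"
  obtains t where "arr t" "Dom C t = Dom C z" "Cod C t = Dom C p1" "p1 \<cdot> t = z" "p2 \<cdot> t = z'"
proof -
  have "rel_mem C s1 s2 (r1 \<cdot> z) (r1 \<cdot> z')" "rel_mem C s1 s2 (r2 \<cdot> z) (r2 \<cdot> z')"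
    using assms by (simp_all add: kernel_pair_rel_memI)
  moreover have "gen_pair C (Dom C r1) z z'"
    using assms(3-7) unfolding gen_pair_def by simp
  ultimately have "\<exists>!t. t \<in> hom C (Dom C z) (Dom C p1) \<and> p1 \<cdot> t = z \<and> p2 \<cdot> t = z'"
    using assms(1) unfolding is_dbl_def by blast
  then show ?thesis
    using that unfolding hom_def by blast
qed

end

section \<open>Regular categories and the shifting property\<close>

locale regular_category = abstract_category +
  assumes regular: "regular C"
begin

lemma finitely_complete: "finitely_complete C"
  using regular unfolding regular_def by (elim conjE)

lemma pullback_exists:
  assumes "arr f" "arr g" "Cod C f = Cod C g"
  obtains p q where "is_pullback C f g p q"
proof -
  have "\<forall>f\<in>Arr C. \<forall>g\<in>Arr C. Cod C f = Cod C g \<longrightarrow> (\<exists>p q. is_pullback C f g p q)"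
    using finitely_complete unfolding finitely_complete_def by (elim conjE)
  then show ?thesis
    using assms that by blast
qed

lemma regular_epi_pullback:
  assumes "is_pullback C f g p q" "regular_epi C f"
  shows "regular_epi C q"
proof -
  have "\<forall>f g p q. is_pullback C f g p q \<and> regular_epi C f \<longrightarrow> regular_epi C q"
    using regular unfolding regular_def by (elim conjE)
  then show ?thesis
    using assms by blast
qed

lemma kernel_pair_coequalizer_exists:
  assumes "is_pullback C f f k1 k2"
  obtains e where "coequalizer C k1 k2 e"
proof -
  have "\<forall>f k1 k2. kernel_pair C k1 k2 f \<longrightarrow> (\<exists>e. coequalizer C k1 k2 e)"
    using regular unfolding regular_def by (elim conjE)
  then show ?thesis
    using assms that unfolding kernel_pair_def by blast
qed

lemma regular_epi_coverE:
  assumes "regular_epi C x" "arr a" "Cod C a = Cod C x"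
  obtains e q where "regular_epi C e" "arr e" "arr q" "Cod C e = Dom C a" "Dom C q = Dom C e"
    "Cod C q = Dom C x" "x \<cdot> q = a \<cdot> e"
proof -
  obtain q e where pb: "is_pullback C x a q e"
    using pullback_exists[OF regular_epi_arr[OF assms(1)] assms(2)] assms(3) by metis
  show ?thesis
    using that[OF regular_epi_pullback[OF pb assms(1)]] pullbackD[OF pb] by simp
qed

lemma terminal_arrowE:
  assumes "arr c"
  obtains t where "arr t" "Dom C t = Cod C c"
    "\<And>a b. arr a \<Longrightarrow> arr b \<Longrightarrow> Cod C a = Cod C c \<Longrightarrow> Cod C b = Cod C c \<Longrightarrow>
      Dom C a = Dom C b \<Longrightarrow> t \<cdot> a = t \<cdot> b"
proof -
  have "\<exists>T\<in>Ob C. \<forall>X\<in>Ob C. \<exists>!h. h \<in> hom C X T"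
    using finitely_complete unfolding finitely_complete_def by (elim conjE)
  then obtain T where T: "\<And>X. X \<in> Ob C \<Longrightarrow> \<exists>!h. h \<in> hom C X T"
    by blast
  have ob: "Dom C g \<in> Ob C" "Cod C g \<in> Ob C" if "arr g" for g
    using that by (simp_all add: Ob_def)
  obtain t where t: "t \<in> hom C (Cod C c) T"
    using T[OF ob(2)[OF assms]] by blast
  have const: "t \<cdot> a = t \<cdot> b"
    if "arr a" "arr b" "Cod C a = Cod C c" "Cod C b = Cod C c" "Dom C a = Dom C b" for a b
  proof -
    have "t \<cdot> a \<in> hom C (Dom C a) T" "t \<cdot> b \<in> hom C (Dom C a) T"
      using t that unfolding hom_def by simp_all
    then show ?thesis
      using T[OF ob(1)[OF that(1)]] by blast
  qed
  show ?thesis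
    using that[of t, OF _ _ const] t unfolding hom_def by blast
qed

lemma dbl_kernel_pair_exists:
  assumes S: "is_pullback C c c s1 s2"
    and R: "arr r1" "arr r2" "Dom C r1 = Dom C r2" "Cod C r1 = Dom C c" "Cod C r2 = Dom C c"
  obtains p1 p2 where "is_dbl C r1 r2 s1 s2 p1 p2"
proof -
  note DS = pullbackD[OF S]
  obtain t where t: "arr t" "Dom C t = Cod C c"
    "\<And>a b. arr a \<Longrightarrow> arr b \<Longrightarrow> Cod C a = Cod C c \<Longrightarrow> Cod C b = Cod C c \<Longrightarrow>
      Dom C a = Dom C b \<Longrightarrow> t \<cdot> a = t \<cdot> b"
    by (rule terminal_arrowE[OF DS(1)]) blast
  obtain j1 j2 where J: "is_pullback C t t j1 j2"
    using pullback_exists[OF t(1) t(1) refl] by blast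
  note DJ = pullbackD[OF J]
  (* The double relation is the kernel pair of the map into Z \<times> Z induced by c, where
     Z \<times> Z is the kernel pair of the terminal arrow. *)
  have eq: "t \<cdot> (c \<cdot> r1) = t \<cdot> (c \<cdot> r2)"
    by (rule t(3)) (use R DS in simp_all)
  obtain m where m: "arr m" "Dom C m = Dom C r1" "Cod C m = Dom C j1" "j1 \<cdot> m = c \<cdot> r1"
    "j2 \<cdot> m = c \<cdot> r2"
    by (rule pullback_liftE[OF J _ _ _ _ _ eq]) (use t R DS in simp_all)
  obtain p1 p2 where P: "is_pullback C m m p1 p2"
    using pullback_exists[OF m(1) m(1) refl] by blast
  show ?thesis
    by (rule that, rule is_dbl_kernel_pair[OF S R J _ _ m P]) (use DJ t(1,2) in simp_all)
qed

lemma gumm_kernel_pairs_pullback: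
  assumes gumm: "gumm C"
    and K: "is_pullback C a a k1 k2" and E: "is_pullback C b b e1 e2" and S: "is_pullback C c c s1 s2"
    and dom: "Dom C b = Dom C a" "Dom C c = Dom C a"
    and ker_le: "\<And>t t'. arr t \<Longrightarrow> arr t' \<Longrightarrow> Cod C t = Dom C a \<Longrightarrow> Cod C t' = Dom C a \<Longrightarrow>
      Dom C t = Dom C t' \<Longrightarrow> a \<cdot> t = a \<cdot> t' \<Longrightarrow> b \<cdot> t = b \<cdot> t'"
    and ker_meet: "\<And>t t'. arr t \<Longrightarrow> arr t' \<Longrightarrow> Cod C t = Dom C a \<Longrightarrow> Cod C t' = Dom C a \<Longrightarrow>
      Dom C t = Dom C t' \<Longrightarrow> b \<cdot> t = b \<cdot> t' \<Longrightarrow> c \<cdot> t = c \<cdot> t' \<Longrightarrow> a \<cdot> t = a \<cdot> t'"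
    and \<iota>: "\<iota> \<in> hom C (Dom C k1) (Dom C e1)" "e1 \<cdot> \<iota> = k1" "e2 \<cdot> \<iota> = k2"
    and dbl: "is_dbl C e1 e2 s1 s2 pR1 pR2" "is_dbl C k1 k2 s1 s2 pT1 pT2"
    and j: "j \<in> hom C (Dom C pT1) (Dom C pR1)" "pR1 \<cdot> j = \<iota> \<cdot> pT1" "pR2 \<cdot> j = \<iota> \<cdot> pT2"
  shows "is_pullback C pR1 \<iota> j pT1"
proof -
  note DK = pullbackD[OF K] and DE = pullbackD[OF E] and DS = pullbackD[OF S]
  have meet: "rel_mem C k1 k2 t t'"
    if "gen_pair C (Cod C e1) t t'" "rel_mem C e1 e2 t t'" "rel_mem C s1 s2 t t'" for t t'
    using that DK DE DS dom kernel_pair_rel_memD[OF E that(2)] kernel_pair_rel_memD[OF S that(3)]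
    unfolding gen_pair_def by (intro kernel_pair_rel_memI[OF K] ker_meet) simp_all
  have le: "rel_mem C e1 e2 t t'" if "gen_pair C (Cod C e1) t t'" "rel_mem C k1 k2 t t'" for t t'
    using that DK DE dom kernel_pair_rel_memD[OF K that(2)]
    unfolding gen_pair_def by (intro kernel_pair_rel_memI[OF E] ker_le) simp_all
  have "\<forall>r1 r2 s1 s2 t1 t2 \<iota> pR1 pR2 pT1 pT2 j.
      equiv_rel C r1 r2 \<and> equiv_rel C s1 s2 \<and> equiv_rel C t1 t2 \<and>
      Cod C s1 = Cod C r1 \<and> Cod C t1 = Cod C r1 \<and>
      (\<forall>x y. gen_pair C (Cod C r1) x y \<and> rel_mem C r1 r2 x y \<and> rel_mem C s1 s2 x y
         \<longrightarrow> rel_mem C t1 t2 x y) \<and>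
      (\<forall>x y. gen_pair C (Cod C r1) x y \<and> rel_mem C t1 t2 x y \<longrightarrow> rel_mem C r1 r2 x y) \<and>
      \<iota> \<in> hom C (Dom C t1) (Dom C r1) \<and> r1 \<cdot> \<iota> = t1 \<and> r2 \<cdot> \<iota> = t2 \<and>
      is_dbl C r1 r2 s1 s2 pR1 pR2 \<and> is_dbl C t1 t2 s1 s2 pT1 pT2 \<and>
      j \<in> hom C (Dom C pT1) (Dom C pR1) \<and> pR1 \<cdot> j = \<iota> \<cdot> pT1 \<and> pR2 \<cdot> j = \<iota> \<cdot> pT2
      \<longrightarrow> is_pullback C pR1 \<iota> j pT1 \<and> is_pullback C pR2 \<iota> j pT2"
    using gumm unfolding gumm_def by (elim conjE)
  moreover have "Cod C s1 = Cod C e1" "Cod C k1 = Cod C e1"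
    using DK DE DS dom by simp_all
  ultimately show ?thesis
    using kernel_pair_equiv_rel[OF E] kernel_pair_equiv_rel[OF S] kernel_pair_equiv_rel[OF K]
      meet le \<iota> dbl j by blast
qed

lemma gumm_shifting:
  assumes gumm: "gumm C"
    and abc: "arr a" "arr b" "arr c" "Dom C b = Dom C a" "Dom C c = Dom C a"
    and ker_le: "\<And>t t'. arr t \<Longrightarrow> arr t' \<Longrightarrow> Cod C t = Dom C a \<Longrightarrow> Cod C t' = Dom C a \<Longrightarrow>
      Dom C t = Dom C t' \<Longrightarrow> a \<cdot> t = a \<cdot> t' \<Longrightarrow> b \<cdot> t = b \<cdot> t'"
    and ker_meet: "\<And>t t'. arr t \<Longrightarrow> arr t' \<Longrightarrow> Cod C t = Dom C a \<Longrightarrow> Cod C t' = Dom C a \<Longrightarrow>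
      Dom C t = Dom C t' \<Longrightarrow> b \<cdot> t = b \<cdot> t' \<Longrightarrow> c \<cdot> t = c \<cdot> t' \<Longrightarrow> a \<cdot> t = a \<cdot> t'"
    and q: "arr q1" "arr q2" "arr s" "arr s'" "Cod C q1 = Dom C a" "Cod C q2 = Dom C a"
      "Cod C s = Dom C a" "Cod C s' = Dom C a" "Dom C q2 = Dom C q1" "Dom C s = Dom C q1"
      "Dom C s' = Dom C q1"
    and eqs: "a \<cdot> q1 = a \<cdot> q2" "c \<cdot> s = c \<cdot> q1" "c \<cdot> s' = c \<cdot> q2" "b \<cdot> s = b \<cdot> s'"
  shows "a \<cdot> s = a \<cdot> s'"
proof -
  obtain k1 k2 where K: "is_pullback C a a k1 k2"
    using pullback_exists[OF abc(1,1) refl] by blast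
  obtain e1 e2 where E: "is_pullback C b b e1 e2"
    using pullback_exists[OF abc(2,2) refl] by blast
  obtain s1 s2 where S: "is_pullback C c c s1 s2"
    using pullback_exists[OF abc(3,3) refl] by blast
  note DK = pullbackD[OF K] and DE = pullbackD[OF E] and DS = pullbackD[OF S]
  have bk: "b \<cdot> k1 = b \<cdot> k2"
    by (rule ker_le) (use DK in simp_all)
  obtain \<iota> where \<iota>: "arr \<iota>" "Dom C \<iota> = Dom C k1" "Cod C \<iota> = Dom C e1" "e1 \<cdot> \<iota> = k1" "e2 \<cdot> \<iota> = k2"
    by (rule pullback_liftE[OF E _ _ _ _ _ bk]) (use DK abc in simp_all)
  obtain pR1 pR2 where R: "is_dbl C e1 e2 s1 s2 pR1 pR2"
    by (rule dbl_kernel_pair_exists[OF S, of e1 e2]) (use DE abc in simp_all)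
  obtain pT1 pT2 where T: "is_dbl C k1 k2 s1 s2 pT1 pT2"
    by (rule dbl_kernel_pair_exists[OF S, of k1 k2]) (use DK abc in simp_all)
  note DR = is_dblD[OF R] and DT = is_dblD[OF T]
  note cT = dbl_kernel_pair_comm[OF T S]
  obtain j where j: "arr j" "Dom C j = Dom C pT1" "Cod C j = Dom C pR1"
    "pR1 \<cdot> j = \<iota> \<cdot> pT1" "pR2 \<cdot> j = \<iota> \<cdot> pT2"
  proof (rule dbl_kernel_pair_liftE[OF R S, of "\<iota> \<cdot> pT1" "\<iota> \<cdot> pT2"])
    show "c \<cdot> (e1 \<cdot> (\<iota> \<cdot> pT1)) = c \<cdot> (e1 \<cdot> (\<iota> \<cdot> pT2))" "c \<cdot> (e2 \<cdot> (\<iota> \<cdot> pT1)) = c \<cdot> (e2 \<cdot> (\<iota> \<cdot> pT2))"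
      using cT DT DE \<iota> by (simp_all flip: comp_assoc)
  qed (use DT DR DE \<iota> abc in simp_all)
  (* ((s, s'), (q1, q2)) lies in E \<box> S with (q1, q2) in K; lifting it along the Gumm
     pullback to K \<box> S puts (s, s') in K. *)
  have GP: "is_pullback C pR1 \<iota> j pT1"
    by (rule gumm_kernel_pairs_pullback[OF gumm K E S abc(4,5) ker_le ker_meet _ _ _ R T])
      (use \<iota> j in \<open>simp_all add: hom_def\<close>)
  obtain \<kappa> where \<kappa>: "arr \<kappa>" "Dom C \<kappa> = Dom C q1" "Cod C \<kappa> = Dom C k1" "k1 \<cdot> \<kappa> = q1" "k2 \<cdot> \<kappa> = q2"
    by (rule pullback_liftE[OF K q(1,2) _ _ _ eqs(1)]) (use q in simp_all)
  obtain \<epsilon> where \<epsilon>: "arr \<epsilon>" "Dom C \<epsilon> = Dom C q1" "Cod C \<epsilon> = Dom C e1" "e1 \<cdot> \<epsilon> = s" "e2 \<cdot> \<epsilon> = s'"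
    by (rule pullback_liftE[OF E q(3,4) _ _ _ eqs(4)]) (use q abc in simp_all)
  obtain \<tau> where \<tau>: "arr \<tau>" "Dom C \<tau> = Dom C q1" "Cod C \<tau> = Dom C pR1" "pR1 \<cdot> \<tau> = \<iota> \<cdot> \<kappa>" "pR2 \<cdot> \<tau> = \<epsilon>"
  proof (rule dbl_kernel_pair_liftE[OF R S, of "\<iota> \<cdot> \<kappa>" \<epsilon>])
    show "c \<cdot> (e1 \<cdot> (\<iota> \<cdot> \<kappa>)) = c \<cdot> (e1 \<cdot> \<epsilon>)" "c \<cdot> (e2 \<cdot> (\<iota> \<cdot> \<kappa>)) = c \<cdot> (e2 \<cdot> \<epsilon>)"
      using \<iota> \<kappa> \<epsilon> DE eqs(2,3) by (simp_all flip: comp_assoc)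
  qed (use \<iota> \<kappa> \<epsilon> DE DR abc in simp_all)
  obtain \<tau>' where \<tau>': "arr \<tau>'" "Cod C \<tau>' = Dom C j" "j \<cdot> \<tau>' = \<tau>" "pT1 \<cdot> \<tau>' = \<kappa>"
    by (rule pullback_liftE[OF GP \<tau>(1) \<kappa>(1) _ _ _ \<tau>(4)]) (use \<tau> \<kappa> \<iota> DR in simp_all)
  have "\<epsilon> = \<iota> \<cdot> (pT2 \<cdot> \<tau>')"
    using \<tau>(5) \<tau>' j DR DT \<iota> by (metis comp_assoc)
  then have "s = k1 \<cdot> (pT2 \<cdot> \<tau>')" "s' = k2 \<cdot> (pT2 \<cdot> \<tau>')"
    using \<epsilon>(4,5) comp_eq_extend'[OF \<iota>(4), of "pT2 \<cdot> \<tau>'"] comp_eq_extend'[OF \<iota>(5), of "pT2 \<cdot> \<tau>'"]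
      \<iota> \<tau>' j DT DE by simp_all
  then show ?thesis
    using pullback_comm[OF K, of "pT2 \<cdot> \<tau>'"] \<tau>' j DT by simp
qed

end

locale pasting_situation = regular_category +
  fixes \<phi> x f y u v w P Z X Y U V
  assumes almost_exact: "almost_exact C" and gumm: "gumm C"
    and \<phi>: "\<phi> \<in> hom C P Z" and x: "x \<in> hom C P X" and f: "f \<in> hom C X Y" and y: "y \<in> hom C Z Y"
    and u: "u \<in> hom C X U" and v: "v \<in> hom C Y V" and w: "w \<in> hom C U V"
    and left_square: "f \<cdot> x = y \<cdot> \<phi>" and right_square: "w \<cdot> u = v \<cdot> f"
    and regular_epi_\<phi>: "regular_epi C \<phi>" and regular_epi_x: "regular_epi C x"
    and regular_epi_y: "regular_epi C y"
    and pushout: "is_pushout C x \<phi> f y"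
    and outer_pullback: "is_pullback C w (v \<cdot> y) (u \<cdot> x) \<phi>"
begin

lemma arrs [simp]: "arr \<phi>" "arr x" "arr f" "arr y" "arr u" "arr v" "arr w"
  using \<phi> x f y u v w unfolding hom_def by auto

lemma doms_cods [simp]:
  "Dom C \<phi> = P" "Cod C \<phi> = Z" "Dom C x = P" "Cod C x = X" "Dom C f = X" "Cod C f = Y"
  "Dom C y = Z" "Cod C y = Y" "Dom C u = X" "Cod C u = U" "Dom C v = Y" "Cod C v = V"
  "Dom C w = U" "Cod C w = V"
  using \<phi> x f y u v w unfolding hom_def by auto

lemma left_square_comm [simp]: "arr t \<Longrightarrow> Cod C t = P \<Longrightarrow> f \<cdot> (x \<cdot> t) = y \<cdot> (\<phi> \<cdot> t)"
  by (rule comp_eq_extend[OF left_square]) auto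

lemma right_square_comm [simp]: "arr t \<Longrightarrow> Cod C t = X \<Longrightarrow> w \<cdot> (u \<cdot> t) = v \<cdot> (f \<cdot> t)"
  by (rule comp_eq_extend[OF right_square]) auto

lemma outer_liftE:
  assumes "arr a" "arr b" "Cod C a = U" "Cod C b = Z" "Dom C a = Dom C b" "w \<cdot> a = v \<cdot> (y \<cdot> b)"
  obtains t where "arr t" "Dom C t = Dom C a" "Cod C t = P" "u \<cdot> (x \<cdot> t) = a" "\<phi> \<cdot> t = b"
proof -
  have "w \<cdot> a = (v \<cdot> y) \<cdot> b"
    using assms by simp
  then obtain t where "arr t" "Dom C t = Dom C a" "Cod C t = Dom C (u \<cdot> x)" "(u \<cdot> x) \<cdot> t = a" "\<phi> \<cdot> t = b"
    using pullback_liftE[OF outer_pullback assms(1,2) _ _ assms(5)] assms by auto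
  then show ?thesis
    using that by simp
qed

lemma outer_jointly_monic:
  assumes "arr t" "arr t'" "Cod C t = P" "Cod C t' = P" "Dom C t = Dom C t'"
    "u \<cdot> (x \<cdot> t) = u \<cdot> (x \<cdot> t')" "\<phi> \<cdot> t = \<phi> \<cdot> t'"
  shows "t = t'"
  by (rule pullback_jointly_monic[OF outer_pullback]) (use assms in simp_all)

lemma outer_transportE:
  assumes "arr p" "arr q" "Cod C p = P" "Cod C q = P" "Dom C p = Dom C q"
    "v \<cdot> (y \<cdot> (\<phi> \<cdot> p)) = v \<cdot> (y \<cdot> (\<phi> \<cdot> q))"
  obtains s where "arr s" "Dom C s = Dom C q" "Cod C s = P" "u \<cdot> (x \<cdot> s) = u \<cdot> (x \<cdot> p)"
    "\<phi> \<cdot> s = \<phi> \<cdot> q"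
proof -
  have "w \<cdot> (u \<cdot> (x \<cdot> p)) = v \<cdot> (y \<cdot> (\<phi> \<cdot> q))"
    using assms by simp
  then obtain s where "arr s" "Dom C s = Dom C (u \<cdot> (x \<cdot> p))" "Cod C s = P"
    "u \<cdot> (x \<cdot> s) = u \<cdot> (x \<cdot> p)" "\<phi> \<cdot> s = \<phi> \<cdot> q"
    using outer_liftE[of "u \<cdot> (x \<cdot> p)" "\<phi> \<cdot> q"] assms by auto
  then show ?thesis
    using that assms by simp
qed

lemma kernel_shift:
  assumes "arr q1" "arr q2" "arr s" "arr s'" "Cod C q1 = P" "Cod C q2 = P" "Cod C s = P"
    "Cod C s' = P" "Dom C q2 = Dom C q1" "Dom C s = Dom C q1" "Dom C s' = Dom C q1"
    and "x \<cdot> q1 = x \<cdot> q2" "\<phi> \<cdot> s = \<phi> \<cdot> q1" "\<phi> \<cdot> s' = \<phi> \<cdot> q2" "u \<cdot> (x \<cdot> s) = u \<cdot> (x \<cdot> s')"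
  shows "x \<cdot> s = x \<cdot> s'"
proof (rule gumm_shifting[OF gumm, of x "u \<cdot> x" \<phi>])
  fix t t' assume "arr t" "arr t'" "Cod C t = Dom C x" "Cod C t' = Dom C x" "Dom C t = Dom C t'"
  then show "x \<cdot> t = x \<cdot> t' \<Longrightarrow> (u \<cdot> x) \<cdot> t = (u \<cdot> x) \<cdot> t'"
    and "(u \<cdot> x) \<cdot> t = (u \<cdot> x) \<cdot> t' \<Longrightarrow> \<phi> \<cdot> t = \<phi> \<cdot> t' \<Longrightarrow> x \<cdot> t = x \<cdot> t'"
    using outer_jointly_monic[of t t'] by simp_all
qed (use assms in simp_all)

lemma shifted_lift_descendsE:
  assumes cover: "is_pullback C x g c2 c1" and h: "arr h" "Cod C h = P" "Dom C h = Dom C g"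
    and \<sigma>: "arr \<sigma>" "Dom C \<sigma> = Dom C c1" "Cod C \<sigma> = P" "u \<cdot> (x \<cdot> \<sigma>) = u \<cdot> (x \<cdot> (h \<cdot> c1))"
      "\<phi> \<cdot> \<sigma> = \<phi> \<cdot> c2"
  obtains T where "arr T" "Dom C T = Dom C g" "Cod C T = X" "T \<cdot> c1 = x \<cdot> \<sigma>"
proof -
  note D = pullbackD[OF cover]
  have descends: "(x \<cdot> \<sigma>) \<cdot> a = (x \<cdot> \<sigma>) \<cdot> b"
    if ab: "arr a" "arr b" "Cod C a = Dom C c1" "Cod C b = Dom C c1" "Dom C a = Dom C b"
      "c1 \<cdot> a = c1 \<cdot> b" for a b
  proof -
    have "x \<cdot> (\<sigma> \<cdot> a) = x \<cdot> (\<sigma> \<cdot> b)"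
    proof (rule kernel_shift[of "c2 \<cdot> a" "c2 \<cdot> b"])
      show "x \<cdot> (c2 \<cdot> a) = x \<cdot> (c2 \<cdot> b)"
        using pullback_comm[OF cover, of a] pullback_comm[OF cover, of b] ab D by simp
      show "\<phi> \<cdot> (\<sigma> \<cdot> a) = \<phi> \<cdot> (c2 \<cdot> a)" "\<phi> \<cdot> (\<sigma> \<cdot> b) = \<phi> \<cdot> (c2 \<cdot> b)"
        using comp_eq_extend[OF \<sigma>(5)] \<sigma> ab D by simp_all
      have "u \<cdot> (x \<cdot> (\<sigma> \<cdot> t)) = u \<cdot> (x \<cdot> (h \<cdot> (c1 \<cdot> t)))" if "arr t" "Cod C t = Dom C c1" for t
        using comp_eq_extend[OF \<sigma>(4), of t] \<sigma> h D that by simp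
      then show "u \<cdot> (x \<cdot> (\<sigma> \<cdot> a)) = u \<cdot> (x \<cdot> (\<sigma> \<cdot> b))"
        using ab by simp
    qed (use ab D \<sigma> in simp_all)
    then show ?thesis
      using ab \<sigma> by simp
  qed
  obtain T where "arr T" "Dom C T = Cod C c1" "Cod C T = Cod C (x \<cdot> \<sigma>)" "T \<cdot> c1 = x \<cdot> \<sigma>"
    by (rule regular_epi_descendE[OF regular_epi_pullback[OF cover regular_epi_x], of "x \<cdot> \<sigma>",
          OF _ _ descends]) (use \<sigma> D in simp_all)
  then show ?thesis
    using that D \<sigma> by simp
qed

lemma transport_mapE:
  assumes g: "arr g" "Cod C g = X" and h: "arr h" "Cod C h = P" "Dom C h = Dom C g"
    and gh: "w \<cdot> (u \<cdot> g) = v \<cdot> (y \<cdot> (\<phi> \<cdot> h))"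
  obtains T where "arr T" "Dom C T = Dom C g" "Cod C T = X" "u \<cdot> T = u \<cdot> (x \<cdot> h)"
    "\<And>l q s. arr l \<Longrightarrow> Cod C l = Dom C g \<Longrightarrow> arr q \<Longrightarrow> Cod C q = P \<Longrightarrow> Dom C q = Dom C l \<Longrightarrow>
      x \<cdot> q = g \<cdot> l \<Longrightarrow> arr s \<Longrightarrow> Cod C s = P \<Longrightarrow> Dom C s = Dom C l \<Longrightarrow>
      u \<cdot> (x \<cdot> s) = u \<cdot> (x \<cdot> (h \<cdot> l)) \<Longrightarrow> \<phi> \<cdot> s = \<phi> \<cdot> q \<Longrightarrow> T \<cdot> l = x \<cdot> s"
proof -
  have "Cod C x = Cod C g"
    using g by simp
  then obtain c2 c1 where cover: "is_pullback C x g c2 c1"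
    using pullback_exists[OF arrs(2) g(1)] by blast
  note D = pullbackD(1-4,6-8)[OF cover] and comm = pullbackD(9)[OF cover]
  have "v \<cdot> (y \<cdot> (\<phi> \<cdot> (h \<cdot> c1))) = w \<cdot> (u \<cdot> (g \<cdot> c1))"
    using comp_eq_extend[OF gh, of c1] g h D by simp
  also have "\<dots> = v \<cdot> (y \<cdot> (\<phi> \<cdot> c2))"
    using comm[symmetric] D by simp
  finally obtain \<sigma> where \<sigma>: "arr \<sigma>" "Dom C \<sigma> = Dom C c1" "Cod C \<sigma> = P"
    "u \<cdot> (x \<cdot> \<sigma>) = u \<cdot> (x \<cdot> (h \<cdot> c1))" "\<phi> \<cdot> \<sigma> = \<phi> \<cdot> c2"
    using outer_transportE[of "h \<cdot> c1" c2] h D by auto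
  obtain T where T: "arr T" "Dom C T = Dom C g" "Cod C T = X" "T \<cdot> c1 = x \<cdot> \<sigma>"
    by (rule shifted_lift_descendsE[OF cover h \<sigma>])
  have uT: "u \<cdot> T = u \<cdot> (x \<cdot> h)"
  proof (rule regular_epi_cancel[OF regular_epi_pullback[OF cover regular_epi_x]])
    show "(u \<cdot> T) \<cdot> c1 = (u \<cdot> (x \<cdot> h)) \<cdot> c1"
      using comp_eq_extend[OF T(4)[symmetric], of "Dom C c1"] T \<sigma> h D by simp
  qed (use T h D in simp_all)
  show ?thesis
  proof (rule that[OF T(1-3) uT])
    fix l q s
    assume l: "arr l" "Cod C l = Dom C g" and q: "arr q" "Cod C q = P" "Dom C q = Dom C l" "x \<cdot> q = g \<cdot> l"
      and s: "arr s" "Cod C s = P" "Dom C s = Dom C l" "u \<cdot> (x \<cdot> s) = u \<cdot> (x \<cdot> (h \<cdot> l))"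
        "\<phi> \<cdot> s = \<phi> \<cdot> q"
    obtain d where d: "arr d" "Dom C d = Dom C q" "Cod C d = Dom C c2" "c2 \<cdot> d = q" "c1 \<cdot> d = l"
      by (rule pullback_liftE[OF cover q(1) l(1) _ _ _ q(4)]) (use q l g D in simp_all)
    have \<sigma>d: "\<sigma> \<cdot> d = s"
    proof (rule outer_jointly_monic)
      show "u \<cdot> (x \<cdot> (\<sigma> \<cdot> d)) = u \<cdot> (x \<cdot> s)"
        using comp_eq_extend[OF \<sigma>(4), of d] d \<sigma> h D s(4) by simp
      show "\<phi> \<cdot> (\<sigma> \<cdot> d) = \<phi> \<cdot> s"
        using comp_eq_extend[OF \<sigma>(5), of d] d \<sigma> D s(5) by simp
    qed (use d \<sigma> s q D in simp_all)
    have "T \<cdot> l = T \<cdot> (c1 \<cdot> d)"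
      using d(5) by simp
    also have "\<dots> = x \<cdot> (\<sigma> \<cdot> d)"
      by (rule comp_eq_extend[OF T(4)]) (use d T \<sigma> D in simp_all)
    finally show "T \<cdot> l = x \<cdot> s"
      using \<sigma>d by simp
  qed
qed

end

section \<open>The relation \<open>\<Lambda>\<close>\<close>

(* N = X \<times>\<^sub>U P consists of the pairs (a, p) with u a = u x p, F is the kernel pair of
   v y \<phi>, and L = F \<times>\<^sub>P N of the triples (a, p, p') with (a, p) in N and (p, p') in F.
   T is the transport map of transport_mapE, and \<Lambda> = (l1, r2) relates (a, p) to
   (T (a, p, p'), p'). *)
locale lambda_relation = pasting_situation +
  fixes n1 n2 f1 f2 l1 l2 T r2
  assumes N: "is_pullback C u (u \<cdot> x) n2 n1"
    and F: "is_pullback C (v \<cdot> (y \<cdot> \<phi>)) (v \<cdot> (y \<cdot> \<phi>)) f1 f2"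
    and L: "is_pullback C f1 n1 l2 l1"
    and T: "arr T" "Dom C T = Dom C l1" "Cod C T = X"
    and T_char: "\<And>l q s. arr l \<Longrightarrow> Cod C l = Dom C l1 \<Longrightarrow>
      arr q \<Longrightarrow> Cod C q = P \<Longrightarrow> Dom C q = Dom C l \<Longrightarrow> x \<cdot> q = n2 \<cdot> (l1 \<cdot> l) \<Longrightarrow>
      arr s \<Longrightarrow> Cod C s = P \<Longrightarrow> Dom C s = Dom C l \<Longrightarrow> u \<cdot> (x \<cdot> s) = u \<cdot> (x \<cdot> (f2 \<cdot> (l2 \<cdot> l))) \<Longrightarrow>
      \<phi> \<cdot> s = \<phi> \<cdot> q \<Longrightarrow> T \<cdot> l = x \<cdot> s"
    and r2: "arr r2" "Dom C r2 = Dom C l1" "Cod C r2 = Dom C n1" "n1 \<cdot> r2 = f2 \<cdot> l2" "n2 \<cdot> r2 = T"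
begin

lemma N_facts [simp]: "arr n1" "arr n2" "Cod C n1 = P" "Cod C n2 = X" "Dom C n2 = Dom C n1"
  using pullbackD[OF N] by simp_all

lemma F_facts [simp]: "arr f1" "arr f2" "Cod C f1 = P" "Cod C f2 = P" "Dom C f2 = Dom C f1"
  using pullbackD[OF F] by simp_all

lemma L_facts [simp]: "arr l1" "arr l2" "Cod C l1 = Dom C n1" "Cod C l2 = Dom C f1" "Dom C l2 = Dom C l1"
  using pullbackD[OF L] by simp_all

lemma r2_facts [simp]: "arr r2" "Dom C r2 = Dom C l1" "Cod C r2 = Dom C n1"
  and T_facts [simp]: "arr T" "Dom C T = Dom C l1" "Cod C T = X"
  using r2 T by simp_all

lemma N_comm: "arr t \<Longrightarrow> Cod C t = Dom C n1 \<Longrightarrow> u \<cdot> (n2 \<cdot> t) = u \<cdot> (x \<cdot> (n1 \<cdot> t))"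
  using pullback_comm[OF N, of t] by simp

lemma F_comm: "arr t \<Longrightarrow> Cod C t = Dom C f1 \<Longrightarrow> v \<cdot> (y \<cdot> (\<phi> \<cdot> (f1 \<cdot> t))) = v \<cdot> (y \<cdot> (\<phi> \<cdot> (f2 \<cdot> t)))"
  using pullback_comm[OF F, of t] by simp

lemma L_comm [simp]: "arr t \<Longrightarrow> Cod C t = Dom C l1 \<Longrightarrow> f1 \<cdot> (l2 \<cdot> t) = n1 \<cdot> (l1 \<cdot> t)"
  using pullback_comm[OF L, of t] by simp

lemma r2_comm [simp]:
  "arr t \<Longrightarrow> Cod C t = Dom C l1 \<Longrightarrow> n1 \<cdot> (r2 \<cdot> t) = f2 \<cdot> (l2 \<cdot> t)"
  "arr t \<Longrightarrow> Cod C t = Dom C l1 \<Longrightarrow> n2 \<cdot> (r2 \<cdot> t) = T \<cdot> t"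
  using comp_eq_extend'[OF r2(4), of t] comp_eq_extend'[OF r2(5), of t] by simp_all

lemma N_liftE:
  assumes "arr a" "arr b" "Cod C a = P" "Cod C b = X" "Dom C a = Dom C b" "u \<cdot> b = u \<cdot> (x \<cdot> a)"
  obtains n where "arr n" "Dom C n = Dom C a" "Cod C n = Dom C n1" "n1 \<cdot> n = a" "n2 \<cdot> n = b"
proof -
  have "u \<cdot> b = (u \<cdot> x) \<cdot> a"
    using assms by simp
  then obtain n where "arr n" "Dom C n = Dom C b" "Cod C n = Dom C n2" "n2 \<cdot> n = b" "n1 \<cdot> n = a"
    using pullback_liftE[OF N assms(2,1)] assms by auto
  then show ?thesis
    using that assms by simp
qed

lemma F_liftE:
  assumes "arr a" "arr b" "Cod C a = P" "Cod C b = P" "Dom C a = Dom C b"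
    "v \<cdot> (y \<cdot> (\<phi> \<cdot> a)) = v \<cdot> (y \<cdot> (\<phi> \<cdot> b))"
  obtains d where "arr d" "Dom C d = Dom C a" "Cod C d = Dom C f1" "f1 \<cdot> d = a" "f2 \<cdot> d = b"
proof -
  have "(v \<cdot> (y \<cdot> \<phi>)) \<cdot> a = (v \<cdot> (y \<cdot> \<phi>)) \<cdot> b"
    using assms by simp
  then obtain d where "arr d" "Dom C d = Dom C a" "Cod C d = Dom C f1" "f1 \<cdot> d = a" "f2 \<cdot> d = b"
    using pullback_liftE[OF F assms(1,2) _ _ assms(5)] assms by auto
  then show ?thesis
    using that by simp
qed

lemma L_liftE:
  assumes "arr n" "arr d" "Cod C n = Dom C n1" "Cod C d = Dom C f1" "Dom C n = Dom C d" "f1 \<cdot> d = n1 \<cdot> n"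
  obtains l where "arr l" "Dom C l = Dom C n" "Cod C l = Dom C l1" "l1 \<cdot> l = n" "l2 \<cdot> l = d"
proof -
  obtain l where "arr l" "Dom C l = Dom C d" "Cod C l = Dom C l2" "l2 \<cdot> l = d" "l1 \<cdot> l = n"
    using pullback_liftE[OF L assms(2,1) _ _ _ assms(6)] assms by auto
  then show ?thesis
    using that assms by simp
qed

lemma N_jointly_monic:
  "arr a \<Longrightarrow> arr b \<Longrightarrow> Cod C a = Dom C n1 \<Longrightarrow> Cod C b = Dom C n1 \<Longrightarrow> Dom C a = Dom C b \<Longrightarrow>
    n1 \<cdot> a = n1 \<cdot> b \<Longrightarrow> n2 \<cdot> a = n2 \<cdot> b \<Longrightarrow> a = b"
  by (rule pullback_jointly_monic[OF N]) simp_all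

lemma F_jointly_monic:
  "arr a \<Longrightarrow> arr b \<Longrightarrow> Cod C a = Dom C f1 \<Longrightarrow> Cod C b = Dom C f1 \<Longrightarrow> Dom C a = Dom C b \<Longrightarrow>
    f1 \<cdot> a = f1 \<cdot> b \<Longrightarrow> f2 \<cdot> a = f2 \<cdot> b \<Longrightarrow> a = b"
  by (rule pullback_jointly_monic[OF F]) simp_all

lemma L_jointly_monic:
  "arr a \<Longrightarrow> arr b \<Longrightarrow> Cod C a = Dom C l1 \<Longrightarrow> Cod C b = Dom C l1 \<Longrightarrow> Dom C a = Dom C b \<Longrightarrow>
    l1 \<cdot> a = l1 \<cdot> b \<Longrightarrow> l2 \<cdot> a = l2 \<cdot> b \<Longrightarrow> a = b"
  by (rule pullback_jointly_monic[OF L]) simp_all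

lemma T_transport_comm:
  assumes l: "arr l" "Cod C l = Dom C l1" and q: "arr q" "Cod C q = P" "Dom C q = Dom C l"
    "x \<cdot> q = n2 \<cdot> (l1 \<cdot> l)"
  shows "v \<cdot> (y \<cdot> (\<phi> \<cdot> (f2 \<cdot> (l2 \<cdot> l)))) = v \<cdot> (y \<cdot> (\<phi> \<cdot> q))"
proof -
  have a: "arr (l1 \<cdot> l)" "Cod C (l1 \<cdot> l) = Dom C n1" using l by simp_all
  have "v \<cdot> (y \<cdot> (\<phi> \<cdot> q)) = w \<cdot> (u \<cdot> (x \<cdot> q))" using q(1-3) by simp
  also have "\<dots> = w \<cdot> (u \<cdot> (n2 \<cdot> (l1 \<cdot> l)))" by (simp only: q(4))
  also have "\<dots> = w \<cdot> (u \<cdot> (x \<cdot> (n1 \<cdot> (l1 \<cdot> l))))" by (simp only: N_comm[OF a])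
  also have "\<dots> = v \<cdot> (y \<cdot> (\<phi> \<cdot> (n1 \<cdot> (l1 \<cdot> l))))" using a by simp
  also have "\<dots> = v \<cdot> (y \<cdot> (\<phi> \<cdot> (f1 \<cdot> (l2 \<cdot> l))))" using l by simp
  also have "\<dots> = v \<cdot> (y \<cdot> (\<phi> \<cdot> (f2 \<cdot> (l2 \<cdot> l))))" by (rule F_comm) (use l in simp_all)
  finally show ?thesis by simp
qed

lemma T_valueE:
  assumes l: "arr l" "Cod C l = Dom C l1" and q: "arr q" "Cod C q = P" "Dom C q = Dom C l"
    "x \<cdot> q = n2 \<cdot> (l1 \<cdot> l)"
  obtains s where "arr s" "Cod C s = P" "Dom C s = Dom C l" "u \<cdot> (x \<cdot> s) = u \<cdot> (x \<cdot> (f2 \<cdot> (l2 \<cdot> l)))"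
      "\<phi> \<cdot> s = \<phi> \<cdot> q" "T \<cdot> l = x \<cdot> s"
proof -
  obtain s where s: "arr s" "Dom C s = Dom C q" "Cod C s = P" "u \<cdot> (x \<cdot> s) = u \<cdot> (x \<cdot> (f2 \<cdot> (l2 \<cdot> l)))"
      "\<phi> \<cdot> s = \<phi> \<cdot> q"
    by (rule outer_transportE[of "f2 \<cdot> (l2 \<cdot> l)" q]) (use l q T_transport_comm[OF l q] in simp_all)
  have "T \<cdot> l = x \<cdot> s" by (rule T_char[OF l q]) (use s q in simp_all)
  then show ?thesis using that s q by simp
qed

lemma L_coverE:
  assumes l: "arr l" "Cod C l = Dom C l1"
  obtains e q where "regular_epi C e" "arr e" "Cod C e = Dom C l" "arr q" "Cod C q = P" "Dom C q = Dom C e"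
    "x \<cdot> q = n2 \<cdot> (l1 \<cdot> (l \<cdot> e))"
proof -
  have a: "arr (n2 \<cdot> (l1 \<cdot> l))" "Cod C (n2 \<cdot> (l1 \<cdot> l)) = Cod C x" using l by simp_all
  obtain e q where eq: "regular_epi C e" "arr e" "arr q" "Cod C e = Dom C (n2 \<cdot> (l1 \<cdot> l))" "Dom C q = Dom C e"
     "Cod C q = Dom C x" "x \<cdot> q = (n2 \<cdot> (l1 \<cdot> l)) \<cdot> e"
    by (rule regular_epi_coverE[OF regular_epi_x a])
  show ?thesis by (rule that[of e q]) (use eq l in simp_all)
qed

lemma T_reflexive:
  assumes l: "arr l" "Cod C l = Dom C l1" "f2 \<cdot> (l2 \<cdot> l) = n1 \<cdot> (l1 \<cdot> l)"
  shows "T \<cdot> l = n2 \<cdot> (l1 \<cdot> l)"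
proof -
  obtain e q where e: "regular_epi C e" "arr e" "Cod C e = Dom C l" "arr q" "Cod C q = P" "Dom C q = Dom C e"
    "x \<cdot> q = n2 \<cdot> (l1 \<cdot> (l \<cdot> e))" by (rule L_coverE[OF l(1,2)])
  have le: "arr (l \<cdot> e)" "Cod C (l \<cdot> e) = Dom C l1" "Dom C (l \<cdot> e) = Dom C e" using l e by simp_all
  have f2e: "f2 \<cdot> (l2 \<cdot> (l \<cdot> e)) = n1 \<cdot> (l1 \<cdot> (l \<cdot> e))"
  proof -
    have "f2 \<cdot> (l2 \<cdot> (l \<cdot> e)) = (f2 \<cdot> (l2 \<cdot> l)) \<cdot> e" using l(1,2) e(2,3) by simp
    also have "\<dots> = (n1 \<cdot> (l1 \<cdot> l)) \<cdot> e" using l(3) by simp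
    also have "\<dots> = n1 \<cdot> (l1 \<cdot> (l \<cdot> e))" using l(1,2) e(2,3) by simp
    finally show ?thesis .
  qed
  have a: "arr (l1 \<cdot> (l \<cdot> e))" "Cod C (l1 \<cdot> (l \<cdot> e)) = Dom C n1" using le by simp_all
  have "u \<cdot> (x \<cdot> q) = u \<cdot> (n2 \<cdot> (l1 \<cdot> (l \<cdot> e)))" by (simp only: e(7))
  also have "\<dots> = u \<cdot> (x \<cdot> (n1 \<cdot> (l1 \<cdot> (l \<cdot> e))))" by (rule N_comm[OF a])
  also have "\<dots> = u \<cdot> (x \<cdot> (f2 \<cdot> (l2 \<cdot> (l \<cdot> e))))" by (simp only: f2e)
  finally have uq: "u \<cdot> (x \<cdot> q) = u \<cdot> (x \<cdot> (f2 \<cdot> (l2 \<cdot> (l \<cdot> e))))" .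
  have "T \<cdot> (l \<cdot> e) = x \<cdot> q" by (rule T_char[OF le(1,2) _ _ _ e(7)]) (use e le uq in simp_all)
  then have "(T \<cdot> l) \<cdot> e = (n2 \<cdot> (l1 \<cdot> l)) \<cdot> e" using l e by simp
  then show ?thesis by (rule regular_epi_cancel[OF e(1), rotated -1]) (use l e in simp_all)
qed

lemma T_symmetric:
  assumes l: "arr l" "Cod C l = Dom C l1"
    and l': "arr l'" "Cod C l' = Dom C l1" "Dom C l' = Dom C l" "l1 \<cdot> l' = r2 \<cdot> l"
      "f2 \<cdot> (l2 \<cdot> l') = f1 \<cdot> (l2 \<cdot> l)"
  shows "T \<cdot> l' = n2 \<cdot> (l1 \<cdot> l)"
proof -
  obtain e q where e: "regular_epi C e" "arr e" "Cod C e = Dom C l" "arr q" "Cod C q = P" "Dom C q = Dom C e"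
    "x \<cdot> q = n2 \<cdot> (l1 \<cdot> (l \<cdot> e))" by (rule L_coverE[OF l(1,2)])
  have le: "arr (l \<cdot> e)" "Cod C (l \<cdot> e) = Dom C l1" "Dom C (l \<cdot> e) = Dom C e" using l e by simp_all
  have le': "arr (l' \<cdot> e)" "Cod C (l' \<cdot> e) = Dom C l1" "Dom C (l' \<cdot> e) = Dom C e" using l' l e by simp_all
  obtain s where s: "arr s" "Cod C s = P" "Dom C s = Dom C (l \<cdot> e)"
      "u \<cdot> (x \<cdot> s) = u \<cdot> (x \<cdot> (f2 \<cdot> (l2 \<cdot> (l \<cdot> e))))" "\<phi> \<cdot> s = \<phi> \<cdot> q" "T \<cdot> (l \<cdot> e) = x \<cdot> s"
    by (rule T_valueE[OF le(1,2) e(4,5) _ e(7)]) (use e le in simp_all)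
  have x1: "l1 \<cdot> (l' \<cdot> e) = r2 \<cdot> (l \<cdot> e)" by (rule comp_eq_extend[OF l'(4)]) (use l l' e in simp_all)
  have "x \<cdot> s = n2 \<cdot> (r2 \<cdot> (l \<cdot> e))" using s(6) le by simp
  then have xs: "x \<cdot> s = n2 \<cdot> (l1 \<cdot> (l' \<cdot> e))" using x1 by simp
  have x2: "f2 \<cdot> (l2 \<cdot> (l' \<cdot> e)) = n1 \<cdot> (l1 \<cdot> (l \<cdot> e))"
  proof -
    have "f2 \<cdot> (l2 \<cdot> (l' \<cdot> e)) = (f2 \<cdot> (l2 \<cdot> l')) \<cdot> e" using l'(1,2) e(2,3) l'(3) by simp
    also have "\<dots> = (f1 \<cdot> (l2 \<cdot> l)) \<cdot> e" using l'(5) by simp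
    also have "\<dots> = n1 \<cdot> (l1 \<cdot> (l \<cdot> e))" using l(1,2) e(2,3) by simp
    finally show ?thesis .
  qed
  have a: "arr (l1 \<cdot> (l \<cdot> e))" "Cod C (l1 \<cdot> (l \<cdot> e)) = Dom C n1" using le by simp_all
  have "u \<cdot> (x \<cdot> q) = u \<cdot> (n2 \<cdot> (l1 \<cdot> (l \<cdot> e)))" by (simp only: e(7))
  also have "\<dots> = u \<cdot> (x \<cdot> (n1 \<cdot> (l1 \<cdot> (l \<cdot> e))))" by (rule N_comm[OF a])
  also have "\<dots> = u \<cdot> (x \<cdot> (f2 \<cdot> (l2 \<cdot> (l' \<cdot> e))))" by (simp only: x2)
  finally have uq: "u \<cdot> (x \<cdot> q) = u \<cdot> (x \<cdot> (f2 \<cdot> (l2 \<cdot> (l' \<cdot> e))))" .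
  have "T \<cdot> (l' \<cdot> e) = x \<cdot> q" by (rule T_char[OF le'(1,2) s(1,2) _ xs e(4,5) _ uq]) (use s e le le' in simp_all)
  then have "(T \<cdot> l') \<cdot> e = (n2 \<cdot> (l1 \<cdot> l)) \<cdot> e" using l l' e by simp
  then show ?thesis by (rule regular_epi_cancel[OF e(1), rotated -1]) (use l l' e in simp_all)
qed

lemma T_transitive:
  assumes la: "arr la" "Cod C la = Dom C l1" and lb: "arr lb" "Cod C lb = Dom C l1"
    and lc: "arr lc" "Cod C lc = Dom C l1"
    and d: "Dom C lb = Dom C la" "Dom C lc = Dom C la"
    and h: "r2 \<cdot> la = l1 \<cdot> lb" "l1 \<cdot> lc = l1 \<cdot> la" "f2 \<cdot> (l2 \<cdot> lc) = f2 \<cdot> (l2 \<cdot> lb)"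
  shows "T \<cdot> lc = T \<cdot> lb"
proof -
  obtain e q where e: "regular_epi C e" "arr e" "Cod C e = Dom C la" "arr q" "Cod C q = P" "Dom C q = Dom C e"
    "x \<cdot> q = n2 \<cdot> (l1 \<cdot> (la \<cdot> e))" by (rule L_coverE[OF la(1,2)])
  have lae: "arr (la \<cdot> e)" "Cod C (la \<cdot> e) = Dom C l1" "Dom C (la \<cdot> e) = Dom C e" using la e by simp_all
  have lbe: "arr (lb \<cdot> e)" "Cod C (lb \<cdot> e) = Dom C l1" "Dom C (lb \<cdot> e) = Dom C e" using lb e d by simp_all
  have lce: "arr (lc \<cdot> e)" "Cod C (lc \<cdot> e) = Dom C l1" "Dom C (lc \<cdot> e) = Dom C e" using lc e d by simp_all
  obtain s1 where s1: "arr s1" "Cod C s1 = P" "Dom C s1 = Dom C (la \<cdot> e)"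
      "u \<cdot> (x \<cdot> s1) = u \<cdot> (x \<cdot> (f2 \<cdot> (l2 \<cdot> (la \<cdot> e))))" "\<phi> \<cdot> s1 = \<phi> \<cdot> q" "T \<cdot> (la \<cdot> e) = x \<cdot> s1"
    by (rule T_valueE[OF lae(1,2) e(4,5) _ e(7)]) (use e lae in simp_all)
  have x1: "r2 \<cdot> (la \<cdot> e) = l1 \<cdot> (lb \<cdot> e)" by (rule comp_eq_extend[OF h(1)]) (use la lb e d in simp_all)
  have "x \<cdot> s1 = n2 \<cdot> (r2 \<cdot> (la \<cdot> e))" using s1(6) lae by simp
  then have xs1: "x \<cdot> s1 = n2 \<cdot> (l1 \<cdot> (lb \<cdot> e))" using x1 by simp
  obtain s2 where s2: "arr s2" "Cod C s2 = P" "Dom C s2 = Dom C (lb \<cdot> e)"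
      "u \<cdot> (x \<cdot> s2) = u \<cdot> (x \<cdot> (f2 \<cdot> (l2 \<cdot> (lb \<cdot> e))))" "\<phi> \<cdot> s2 = \<phi> \<cdot> s1" "T \<cdot> (lb \<cdot> e) = x \<cdot> s2"
    by (rule T_valueE[OF lbe(1,2) s1(1,2) _ xs1]) (use s1 lbe lae in simp_all)
  have x2: "l1 \<cdot> (lc \<cdot> e) = l1 \<cdot> (la \<cdot> e)" by (rule comp_eq_extend[OF h(2)]) (use la lc e d in simp_all)
  have x3: "f2 \<cdot> (l2 \<cdot> (lc \<cdot> e)) = f2 \<cdot> (l2 \<cdot> (lb \<cdot> e))"
  proof -
    have "f2 \<cdot> (l2 \<cdot> (lc \<cdot> e)) = (f2 \<cdot> (l2 \<cdot> lc)) \<cdot> e" using lc e d by simp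
    also have "\<dots> = (f2 \<cdot> (l2 \<cdot> lb)) \<cdot> e" using h(3) by simp
    also have "\<dots> = f2 \<cdot> (l2 \<cdot> (lb \<cdot> e))" using lb e d by simp
    finally show ?thesis .
  qed
  have xq: "x \<cdot> q = n2 \<cdot> (l1 \<cdot> (lc \<cdot> e))" using e(7) x2 by simp
  have "T \<cdot> (lc \<cdot> e) = x \<cdot> s2"
    by (rule T_char[OF lce(1,2) e(4,5) _ xq s2(1,2)]) (use s1 s2 e lce lbe lae x3 in simp_all)
  then have "(T \<cdot> lc) \<cdot> e = (T \<cdot> lb) \<cdot> e" using s2(6) lc lb e d by simp
  then show ?thesis by (rule regular_epi_cancel[OF e(1), rotated -1]) (use lc lb e d in simp_all)
qed

lemma Lambda_jointly_monic:
  assumes "gen_pair C (Dom C l1) a b" "l1 \<cdot> a = l1 \<cdot> b" "r2 \<cdot> a = r2 \<cdot> b"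
  shows "a = b"
proof -
  have g: "arr a" "arr b" "Cod C a = Dom C l1" "Cod C b = Dom C l1" "Dom C a = Dom C b"
    using assms(1) unfolding gen_pair_def by auto
  have "n1 \<cdot> (l1 \<cdot> a) = n1 \<cdot> (l1 \<cdot> b)" "n1 \<cdot> (r2 \<cdot> a) = n1 \<cdot> (r2 \<cdot> b)"
    using assms(2,3) by simp_all
  then have F_eq: "f1 \<cdot> (l2 \<cdot> a) = f1 \<cdot> (l2 \<cdot> b)" "f2 \<cdot> (l2 \<cdot> a) = f2 \<cdot> (l2 \<cdot> b)"
    using g by simp_all
  have l2_eq: "l2 \<cdot> a = l2 \<cdot> b"
    by (rule F_jointly_monic[OF _ _ _ _ _ F_eq]) (use g in simp_all)
  show "a = b"
    by (rule L_jointly_monic[OF _ _ _ _ _ assms(2) l2_eq]) (use g in simp_all)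
qed

lemma Lambda_refl:
  assumes n: "arr n" "Cod C n = Cod C l1"
  shows "rel_mem C l1 r2 n n"
proof -
  obtain d where d: "arr d" "Dom C d = Dom C (n1 \<cdot> n)" "Cod C d = Dom C f1" "f1 \<cdot> d = n1 \<cdot> n" "f2 \<cdot> d = n1 \<cdot> n"
    by (rule F_liftE[of "n1 \<cdot> n" "n1 \<cdot> n"]) (use n in simp_all)
  obtain l where l: "arr l" "Dom C l = Dom C n" "Cod C l = Dom C l1" "l1 \<cdot> l = n" "l2 \<cdot> l = d"
    by (rule L_liftE[of n d]) (use n d in simp_all)
  have f2l: "f2 \<cdot> (l2 \<cdot> l) = n1 \<cdot> (l1 \<cdot> l)" using l d by simp
  have Tl: "T \<cdot> l = n2 \<cdot> (l1 \<cdot> l)" by (rule T_reflexive[OF l(1,3) f2l])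
  have "r2 \<cdot> l = n"
  proof (rule N_jointly_monic)
    show "n1 \<cdot> (r2 \<cdot> l) = n1 \<cdot> n" using l d by simp
    show "n2 \<cdot> (r2 \<cdot> l) = n2 \<cdot> n" using l Tl by simp
  qed (use l n in simp_all)
  then show ?thesis unfolding rel_mem_def using l by auto
qed

lemma L_reverseE:
  assumes l: "arr l" "Cod C l = Dom C l1"
  obtains l' where "arr l'" "Dom C l' = Dom C l" "Cod C l' = Dom C l1" "l1 \<cdot> l' = r2 \<cdot> l"
    "f1 \<cdot> (l2 \<cdot> l') = f2 \<cdot> (l2 \<cdot> l)" "f2 \<cdot> (l2 \<cdot> l') = f1 \<cdot> (l2 \<cdot> l)" "r2 \<cdot> l' = l1 \<cdot> l"
proof -
  obtain d where d: "arr d" "Dom C d = Dom C l" "Cod C d = Dom C f1"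
    "f1 \<cdot> d = f2 \<cdot> (l2 \<cdot> l)" "f2 \<cdot> d = f1 \<cdot> (l2 \<cdot> l)"
    by (rule F_liftE[of "f2 \<cdot> (l2 \<cdot> l)" "f1 \<cdot> (l2 \<cdot> l)"]) (use l F_comm[of "l2 \<cdot> l"] in simp_all)
  have "f1 \<cdot> d = n1 \<cdot> (r2 \<cdot> l)"
    using d l by simp
  then obtain l' where l': "arr l'" "Dom C l' = Dom C l" "Cod C l' = Dom C l1" "l1 \<cdot> l' = r2 \<cdot> l"
    "l2 \<cdot> l' = d"
    using L_liftE[of "r2 \<cdot> l" d] l d by auto
  have T_l': "T \<cdot> l' = n2 \<cdot> (l1 \<cdot> l)"
    by (rule T_symmetric[OF l l'(1,3)]) (use l l' d in simp_all)
  have "r2 \<cdot> l' = l1 \<cdot> l"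
    by (rule N_jointly_monic) (use l l' d T_l' in simp_all)
  then show ?thesis
    by (intro that[of l']) (use l' d in simp_all)
qed

lemma Lambda_sym:
  assumes "rel_mem C l1 r2 a b"
  shows "rel_mem C l1 r2 b a"
proof -
  obtain l where l: "arr l" "Cod C l = Dom C l1" "l1 \<cdot> l = a" "r2 \<cdot> l = b"
    using assms unfolding rel_mem_def by auto
  obtain l' where "arr l'" "Cod C l' = Dom C l1" "l1 \<cdot> l' = r2 \<cdot> l" "r2 \<cdot> l' = l1 \<cdot> l"
    by (rule L_reverseE[OF l(1,2)])
  then show ?thesis
    using l unfolding rel_mem_def by auto
qed

lemma Lambda_trans:
  assumes h: "gen_pair C (Cod C l1) a b" "gen_pair C (Cod C l1) b c"
    "rel_mem C l1 r2 a b" "rel_mem C l1 r2 b c"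
  shows "rel_mem C l1 r2 a c"
proof -
  obtain la where la: "arr la" "Cod C la = Dom C l1" "l1 \<cdot> la = a" "r2 \<cdot> la = b"
    using h unfolding rel_mem_def by auto
  obtain lb where lb: "arr lb" "Cod C lb = Dom C l1" "l1 \<cdot> lb = b" "r2 \<cdot> lb = c"
    using h unfolding rel_mem_def by auto
  have dd: "Dom C lb = Dom C la"
    using dom_comp[of lb l1] dom_comp[of la r2] la lb by simp
  have v1: "v \<cdot> (y \<cdot> (\<phi> \<cdot> (n1 \<cdot> a))) = v \<cdot> (y \<cdot> (\<phi> \<cdot> (n1 \<cdot> b)))"
  proof -
    have "v \<cdot> (y \<cdot> (\<phi> \<cdot> (n1 \<cdot> (l1 \<cdot> la)))) = v \<cdot> (y \<cdot> (\<phi> \<cdot> (n1 \<cdot> (r2 \<cdot> la))))"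
      using F_comm[of "l2 \<cdot> la", symmetric] la(1,2) by simp
    then show ?thesis by (simp only: la(3,4))
  qed
  have v2: "v \<cdot> (y \<cdot> (\<phi> \<cdot> (n1 \<cdot> b))) = v \<cdot> (y \<cdot> (\<phi> \<cdot> (n1 \<cdot> c)))"
  proof -
    have "v \<cdot> (y \<cdot> (\<phi> \<cdot> (n1 \<cdot> (l1 \<cdot> lb)))) = v \<cdot> (y \<cdot> (\<phi> \<cdot> (n1 \<cdot> (r2 \<cdot> lb))))"
      using F_comm[of "l2 \<cdot> lb", symmetric] lb(1,2) by simp
    then show ?thesis by (simp only: lb(3,4))
  qed
  have da: "Dom C a = Dom C la"
    using dom_comp[of la l1] la by simp
  have ac: "arr a" "arr c" "Cod C a = Dom C n1" "Cod C c = Dom C n1" "Dom C c = Dom C la" "Dom C a = Dom C la"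
    using la lb dd da by auto
  obtain d where d: "arr d" "Dom C d = Dom C (n1 \<cdot> a)" "Cod C d = Dom C f1"
      "f1 \<cdot> d = n1 \<cdot> a" "f2 \<cdot> d = n1 \<cdot> c"
    by (rule F_liftE[of "n1 \<cdot> a" "n1 \<cdot> c"]) (use ac la v1 v2 in simp_all)
  obtain lc where lc: "arr lc" "Dom C lc = Dom C a" "Cod C lc = Dom C l1" "l1 \<cdot> lc = a" "l2 \<cdot> lc = d"
    by (rule L_liftE[of a d]) (use ac la d in simp_all)
  have fl: "n1 \<cdot> c = f2 \<cdot> (l2 \<cdot> lb)"
  proof -
    have "f2 \<cdot> (l2 \<cdot> lb) = n1 \<cdot> (r2 \<cdot> lb)" using lb(1,2) by simp
    then show ?thesis using lb(4) by simp
  qed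
  have Tc: "T \<cdot> lc = T \<cdot> lb"
    by (rule T_transitive[OF la(1,2) lb(1,2) lc(1,3)]) (use la lb lc d dd ac fl in simp_all)
  have "r2 \<cdot> lc = c"
  proof (rule N_jointly_monic)
    show "n1 \<cdot> (r2 \<cdot> lc) = n1 \<cdot> c" using lc d by simp
    show "n2 \<cdot> (r2 \<cdot> lc) = n2 \<cdot> c"
    proof -
      have "n2 \<cdot> (r2 \<cdot> lc) = T \<cdot> lb" using lc Tc by simp
      also have "\<dots> = n2 \<cdot> (r2 \<cdot> lb)" using lb(1,2) by simp
      finally show ?thesis using lb(4) by simp
    qed
  qed (use lc ac la in simp_all)
  then show ?thesis unfolding rel_mem_def using lc by auto
qed

lemma Lambda_equiv_rel: "equiv_rel C l1 r2"
  unfolding equiv_rel_def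
proof (intro conjI)
  show "\<forall>a b. gen_pair C (Dom C l1) a b \<and> l1 \<cdot> a = l1 \<cdot> b \<and> r2 \<cdot> a = r2 \<cdot> b \<longrightarrow> a = b"
    using Lambda_jointly_monic by blast
  show "\<forall>n\<in>Arr C. Cod C n = Cod C l1 \<longrightarrow> rel_mem C l1 r2 n n"
    using Lambda_refl by blast
  show "\<forall>a b. gen_pair C (Cod C l1) a b \<and> rel_mem C l1 r2 a b \<longrightarrow> rel_mem C l1 r2 b a"
    using Lambda_sym by blast
  show "\<forall>a b c. gen_pair C (Cod C l1) a b \<and> gen_pair C (Cod C l1) b c \<and>
      rel_mem C l1 r2 a b \<and> rel_mem C l1 r2 b c \<longrightarrow> rel_mem C l1 r2 a c"
    using Lambda_trans by blast
qed simp_all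

lemma Lambda_r2_pullback: "is_pullback C f2 n1 l2 r2"
proof (rule pullbackI)
  fix h k assume hk: "arr h" "arr k" "Cod C h = Dom C f2" "Cod C k = Dom C n1" "Dom C h = Dom C k"
    "f2 \<cdot> h = n1 \<cdot> k"
  obtain d where d: "arr d" "Dom C d = Dom C h" "Cod C d = Dom C f1" "f1 \<cdot> d = f2 \<cdot> h" "f2 \<cdot> d = f1 \<cdot> h"
    by (rule F_liftE[of "f2 \<cdot> h" "f1 \<cdot> h"]) (use hk F_comm[of h] in simp_all)
  obtain l where l: "arr l" "Dom C l = Dom C h" "Cod C l = Dom C l1" "l1 \<cdot> l = k" "l2 \<cdot> l = d"
    by (rule L_liftE[of k d]) (use hk d in simp_all)
  obtain l' where l': "arr l'" "Dom C l' = Dom C l" "Cod C l' = Dom C l1" "r2 \<cdot> l' = l1 \<cdot> l"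
    "f1 \<cdot> (l2 \<cdot> l') = f2 \<cdot> (l2 \<cdot> l)" "f2 \<cdot> (l2 \<cdot> l') = f1 \<cdot> (l2 \<cdot> l)"
    by (rule L_reverseE[OF l(1,3)])
  have "l2 \<cdot> l' = h"
    by (rule F_jointly_monic) (use hk d l l' in simp_all)
  then show "\<exists>t. arr t \<and> Dom C t = Dom C h \<and> Cod C t = Dom C l2 \<and> l2 \<cdot> t = h \<and> r2 \<cdot> t = k"
    using l l' by auto
next
  fix t t' assume t: "arr t" "arr t'" "Cod C t = Dom C l2" "Cod C t' = Dom C l2" "Dom C t = Dom C t'"
    "l2 \<cdot> t = l2 \<cdot> t'" "r2 \<cdot> t = r2 \<cdot> t'"
  obtain s where s: "arr s" "Dom C s = Dom C t" "Cod C s = Dom C l1" "l1 \<cdot> s = r2 \<cdot> t"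
    "f1 \<cdot> (l2 \<cdot> s) = f2 \<cdot> (l2 \<cdot> t)" "f2 \<cdot> (l2 \<cdot> s) = f1 \<cdot> (l2 \<cdot> t)" "r2 \<cdot> s = l1 \<cdot> t"
    by (rule L_reverseE[of t]) (use t in simp_all)
  obtain s' where s': "arr s'" "Dom C s' = Dom C t'" "Cod C s' = Dom C l1" "l1 \<cdot> s' = r2 \<cdot> t'"
    "f1 \<cdot> (l2 \<cdot> s') = f2 \<cdot> (l2 \<cdot> t')" "f2 \<cdot> (l2 \<cdot> s') = f1 \<cdot> (l2 \<cdot> t')" "r2 \<cdot> s' = l1 \<cdot> t'"
    by (rule L_reverseE[of t']) (use t in simp_all)
  have "l2 \<cdot> s = l2 \<cdot> s'"
    by (rule F_jointly_monic) (use t s s' in simp_all)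
  then have "s = s'"
    by (rule L_jointly_monic[rotated -1]) (use t s s' in simp_all)
  then have "l1 \<cdot> t = l1 \<cdot> t'"
    using s(7) s'(7) by simp
  then show "t = t'"
    by (rule L_jointly_monic[rotated -2]) (use t in simp_all)
qed (simp_all add: r2(4))

lemma Lambda_discrete_fibration: "discrete_fibration C l1 r2 f1 f2 n1 l2"
  unfolding discrete_fibration_def
  by (intro conjI L Lambda_r2_pullback) (simp_all add: hom_def r2(4) pullbackD[OF L])

lemma Lambda_effectiveE:
  obtains H where "is_pullback C H H l1 r2"
proof -
  obtain c where coeq: "coequalizer C f1 f2 c"
    using kernel_pair_coequalizer_exists[OF F] by blast
  have "regular_epi C c"
    using coeq coequalizerD(3)[OF coeq] unfolding regular_epi_def by blast
  moreover have "kernel_pair C f1 f2 c"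
    unfolding kernel_pair_def by (rule kernel_pair_of_coequalizer[OF F coeq])
  moreover have "\<forall>f k1 k2 r1 r2 g h.
      regular_epi C f \<and> kernel_pair C k1 k2 f \<and> equiv_rel C r1 r2 \<and>
      discrete_fibration C r1 r2 k1 k2 g h \<longrightarrow> effective C r1 r2"
    using almost_exact unfolding almost_exact_def by (elim conjE)
  ultimately have "effective C l1 r2"
    using Lambda_equiv_rel Lambda_discrete_fibration by blast
  then show ?thesis
    using that unfolding effective_def kernel_pair_def by blast
qed

(* Objects are identity arrows, so P also denotes the identity of P. *)
lemma N_diagonalE:
  obtains i where "arr i" "Dom C i = P" "Cod C i = Dom C n1" "n1 \<cdot> i = P" "n2 \<cdot> i = x"
proof -
  have P: "arr P" "Dom C P = P" "Cod C P = P" "x \<cdot> P = x"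
    using arr_dom[of x] dom_dom[of x] cod_dom[of x] comp_arr_dom[of x] by simp_all
  show ?thesis
    by (rule N_liftE[of P x]) (use P that in simp_all)
qed

end

section \<open>Joint monicity of \<open>f\<close> and \<open>u\<close>\<close>

locale lambda_kernel = lambda_relation +
  fixes H i
  assumes H: "is_pullback C H H l1 r2"
    and i: "arr i" "Dom C i = P" "Cod C i = Dom C n1" "n1 \<cdot> i = P" "n2 \<cdot> i = x"
begin

lemma H_facts [simp]: "arr H" "Dom C H = Dom C n1"
  using pullbackD[OF H] by simp_all

lemma H_comm: "arr l \<Longrightarrow> Cod C l = Dom C l1 \<Longrightarrow> H \<cdot> (l1 \<cdot> l) = H \<cdot> (r2 \<cdot> l)"
  by (rule pullback_comm[OF H]) simp_all

lemma diagonal_comm: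
  assumes "arr a" "Cod C a = P"
  shows "n1 \<cdot> (i \<cdot> a) = a" "n2 \<cdot> (i \<cdot> a) = x \<cdot> a"
proof -
  have "n1 \<cdot> (i \<cdot> a) = P \<cdot> a"
    by (rule comp_eq_extend'[OF i(4)]) (use i assms in simp_all)
  then show "n1 \<cdot> (i \<cdot> a) = a"
    using comp_cod_arr[of a] assms by simp
  show "n2 \<cdot> (i \<cdot> a) = x \<cdot> a"
    by (rule comp_eq_extend'[OF i(5)]) (use i assms in simp_all)
qed

lemma H_diagonal_eq:
  assumes ab: "arr \<alpha>" "arr \<beta>" "Cod C \<alpha> = P" "Cod C \<beta> = P" "Dom C \<alpha> = Dom C \<beta>"
    and s: "arr s" "Cod C s = P" "Dom C s = Dom C \<alpha>"
      "u \<cdot> (x \<cdot> s) = u \<cdot> (x \<cdot> \<beta>)" "\<phi> \<cdot> s = \<phi> \<cdot> \<alpha>" "x \<cdot> s = x \<cdot> \<beta>"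
    and vv: "v \<cdot> (y \<cdot> (\<phi> \<cdot> \<alpha>)) = v \<cdot> (y \<cdot> (\<phi> \<cdot> \<beta>))"
  shows "H \<cdot> (i \<cdot> \<alpha>) = H \<cdot> (i \<cdot> \<beta>)"
proof -
  obtain d where d: "arr d" "Dom C d = Dom C \<alpha>" "Cod C d = Dom C f1" "f1 \<cdot> d = \<alpha>" "f2 \<cdot> d = \<beta>"
    by (rule F_liftE[OF ab vv])
  have ia: "arr (i \<cdot> \<alpha>)" "Cod C (i \<cdot> \<alpha>) = Dom C n1" "Dom C (i \<cdot> \<alpha>) = Dom C \<alpha>" using i ab by simp_all
  have ib: "arr (i \<cdot> \<beta>)" "Cod C (i \<cdot> \<beta>) = Dom C n1" "Dom C (i \<cdot> \<beta>) = Dom C \<alpha>" using i ab by simp_all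
  obtain l where l: "arr l" "Dom C l = Dom C (i \<cdot> \<alpha>)" "Cod C l = Dom C l1" "l1 \<cdot> l = i \<cdot> \<alpha>" "l2 \<cdot> l = d"
    by (rule L_liftE[OF ia(1) d(1) ia(2) d(3)]) (use ia d diagonal_comm[OF ab(1,3)] in simp_all)
  have Tl: "T \<cdot> l = x \<cdot> s"
  proof (rule T_char[OF l(1,3) ab(1,3)])
    show "x \<cdot> \<alpha> = n2 \<cdot> (l1 \<cdot> l)" using l(4) diagonal_comm[OF ab(1,3)] by simp
    show "u \<cdot> (x \<cdot> s) = u \<cdot> (x \<cdot> (f2 \<cdot> (l2 \<cdot> l)))" using l(5) d(5) s(4) by simp
  qed (use l ia s in simp_all)
  have "r2 \<cdot> l = i \<cdot> \<beta>"
  proof (rule N_jointly_monic)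
    show "n1 \<cdot> (r2 \<cdot> l) = n1 \<cdot> (i \<cdot> \<beta>)" using l(1,3,5) d(5) diagonal_comm[OF ab(2,4)] by simp
    show "n2 \<cdot> (r2 \<cdot> l) = n2 \<cdot> (i \<cdot> \<beta>)" using l(1,3) Tl s(6) diagonal_comm[OF ab(2,4)] by simp
  qed (use l ia ib in simp_all)
  then show ?thesis using H_comm[OF l(1,3)] l(4) by simp
qed

lemma H_diagonal_factorE:
  obtains g t where "arr g" "Dom C g = X" "Cod C g = Cod C H" "g \<cdot> x = H \<cdot> i"
    "arr t" "Dom C t = Y" "t \<cdot> f = g"
proof -
  have Hi: "arr (H \<cdot> i)" "Dom C (H \<cdot> i) = P" "Cod C (H \<cdot> i) = Cod C H"
    using i by simp_all
  have Hi_eq: "(H \<cdot> i) \<cdot> \<alpha> = (H \<cdot> i) \<cdot> \<beta>"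
    if "arr \<alpha>" "arr \<beta>" "Cod C \<alpha> = P" "Cod C \<beta> = P" "Dom C \<alpha> = Dom C \<beta>" and s: "arr s" "Cod C s = P"
      "Dom C s = Dom C \<alpha>" "u \<cdot> (x \<cdot> s) = u \<cdot> (x \<cdot> \<beta>)" "\<phi> \<cdot> s = \<phi> \<cdot> \<alpha>" "x \<cdot> s = x \<cdot> \<beta>"
      "v \<cdot> (y \<cdot> (\<phi> \<cdot> \<alpha>)) = v \<cdot> (y \<cdot> (\<phi> \<cdot> \<beta>))" for \<alpha> \<beta> s
    using H_diagonal_eq[OF that] that i by simp
  have x_eq: "(H \<cdot> i) \<cdot> \<alpha> = (H \<cdot> i) \<cdot> \<beta>"
    if ab: "arr \<alpha>" "arr \<beta>" "Cod C \<alpha> = Dom C x" "Cod C \<beta> = Dom C x" "Dom C \<alpha> = Dom C \<beta>"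
      "x \<cdot> \<alpha> = x \<cdot> \<beta>" for \<alpha> \<beta>
  proof (rule Hi_eq[of \<alpha> \<beta> \<alpha>])
    have "v \<cdot> (f \<cdot> (x \<cdot> \<alpha>)) = v \<cdot> (f \<cdot> (x \<cdot> \<beta>))"
      using ab(6) by simp
    then show "v \<cdot> (y \<cdot> (\<phi> \<cdot> \<alpha>)) = v \<cdot> (y \<cdot> (\<phi> \<cdot> \<beta>))"
      using ab(1-4) by simp
  qed (use ab in simp_all)
  have \<phi>_eq: "(H \<cdot> i) \<cdot> \<alpha> = (H \<cdot> i) \<cdot> \<beta>"
    if ab: "arr \<alpha>" "arr \<beta>" "Cod C \<alpha> = Dom C \<phi>" "Cod C \<beta> = Dom C \<phi>" "Dom C \<alpha> = Dom C \<beta>"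
      "\<phi> \<cdot> \<alpha> = \<phi> \<cdot> \<beta>" for \<alpha> \<beta>
    by (rule Hi_eq[of \<alpha> \<beta> \<beta>]) (use ab in simp_all)
  obtain g where g: "arr g" "Dom C g = X" "Cod C g = Cod C H" "g \<cdot> x = H \<cdot> i"
    by (rule regular_epi_descendE[OF regular_epi_x Hi(1), OF _ x_eq]) (use Hi in simp_all)
  obtain g' where g': "arr g'" "Dom C g' = Z" "Cod C g' = Cod C H" "g' \<cdot> \<phi> = H \<cdot> i"
    by (rule regular_epi_descendE[OF regular_epi_\<phi> Hi(1), OF _ \<phi>_eq]) (use Hi in simp_all)
  obtain t where "arr t" "Dom C t = Y" "Cod C t = Cod C g" "t \<cdot> f = g"
    by (rule pushout_factorE[OF pushout g(1) g'(1)]) (use g g' in simp_all)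
  then show ?thesis
    using that g by blast
qed

lemma H_eq_factor_n2:
  assumes g: "arr g" "Dom C g = X" "Cod C g = Cod C H" "g \<cdot> x = H \<cdot> i"
  shows "H = g \<cdot> n2"
proof -
  have n2a: "arr n2" "Cod C n2 = Cod C x" by simp_all
  obtain e q where e: "regular_epi C e" "arr e" "arr q" "Cod C e = Dom C n2" "Dom C q = Dom C e"
      "Cod C q = Dom C x" "x \<cdot> q = n2 \<cdot> e"
    by (rule regular_epi_coverE[OF regular_epi_x n2a])
  have e': "Cod C e = Dom C n1" "Cod C q = P" using e by simp_all
  have vv: "v \<cdot> (y \<cdot> (\<phi> \<cdot> (n1 \<cdot> e))) = v \<cdot> (y \<cdot> (\<phi> \<cdot> q))"
  proof -
    have "v \<cdot> (y \<cdot> (\<phi> \<cdot> q)) = w \<cdot> (u \<cdot> (x \<cdot> q))" using e(3) e' by simp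
    also have "\<dots> = w \<cdot> (u \<cdot> (n2 \<cdot> e))" by (simp only: e(7))
    also have "\<dots> = w \<cdot> (u \<cdot> (x \<cdot> (n1 \<cdot> e)))" by (simp only: N_comm[OF e(2) e'(1)])
    also have "\<dots> = v \<cdot> (y \<cdot> (\<phi> \<cdot> (n1 \<cdot> e)))" using e(2) e' by simp
    finally show ?thesis by simp
  qed
  obtain d where d: "arr d" "Dom C d = Dom C (n1 \<cdot> e)" "Cod C d = Dom C f1" "f1 \<cdot> d = n1 \<cdot> e" "f2 \<cdot> d = q"
    by (rule F_liftE[of "n1 \<cdot> e" q]) (use e e' vv in simp_all)
  obtain l where l: "arr l" "Dom C l = Dom C e" "Cod C l = Dom C l1" "l1 \<cdot> l = e" "l2 \<cdot> l = d"
    by (rule L_liftE[of e d]) (use e e' d in simp_all)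
  have Tl: "T \<cdot> l = x \<cdot> q"
    by (rule T_char[OF l(1,3) e(3) e'(2)]) (use l d e e' in simp_all)
  have iq: "arr (i \<cdot> q)" "Cod C (i \<cdot> q) = Dom C n1" using i e e' by simp_all
  have rl: "r2 \<cdot> l = i \<cdot> q"
  proof (rule N_jointly_monic)
    show "n1 \<cdot> (r2 \<cdot> l) = n1 \<cdot> (i \<cdot> q)" using l(1,3,5) d(5) diagonal_comm[OF e(3) e'(2)] by simp
    show "n2 \<cdot> (r2 \<cdot> l) = n2 \<cdot> (i \<cdot> q)" using l(1,3) Tl diagonal_comm[OF e(3) e'(2)] by simp
  qed (use l iq i e e' in simp_all)
  have "H \<cdot> e = H \<cdot> (i \<cdot> q)" using H_comm[OF l(1,3)] l(4) rl by simp
  also have "\<dots> = (H \<cdot> i) \<cdot> q" using i H_facts e e' by simp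
  also have "\<dots> = (g \<cdot> x) \<cdot> q" using g(4) by simp
  also have "\<dots> = g \<cdot> (n2 \<cdot> e)" using g(1,2) e e' by simp
  also have "\<dots> = (g \<cdot> n2) \<cdot> e" using g(1,2) e e' by simp
  finally have he: "H \<cdot> e = (g \<cdot> n2) \<cdot> e" .
  show ?thesis by (rule regular_epi_cancel[OF e(1) _ _ _ _ _ he]) (use H_facts g(1,2,3) e(2) e' in simp_all)
qed

lemma f_u_jointly_monic_of_kernel:
  assumes a: "arr a1" "arr a2" "Cod C a1 = X" "Cod C a2 = X" "Dom C a1 = Dom C a2"
    and h: "f \<cdot> a1 = f \<cdot> a2" "u \<cdot> a1 = u \<cdot> a2"
  shows "a1 = a2"
proof -
  obtain g t0 where g: "arr g" "Dom C g = X" "Cod C g = Cod C H" "g \<cdot> x = H \<cdot> i"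
    and t0: "arr t0" "Dom C t0 = Y" "t0 \<cdot> f = g"
    by (rule H_diagonal_factorE)
  note Hg = H_eq_factor_n2[OF g]
  have a1a: "arr a1" "Cod C a1 = Cod C x" using a by simp_all
  obtain e q where e: "regular_epi C e" "arr e" "arr q" "Cod C e = Dom C a1" "Dom C q = Dom C e"
        "Cod C q = Dom C x" "x \<cdot> q = a1 \<cdot> e"
    by (rule regular_epi_coverE[OF regular_epi_x a1a])
  have e': "Cod C q = P" using e by simp
  have ua: "u \<cdot> (a2 \<cdot> e) = u \<cdot> (x \<cdot> q)"
  proof -
    have "u \<cdot> (a2 \<cdot> e) = (u \<cdot> a2) \<cdot> e" using a e by simp
    also have "\<dots> = (u \<cdot> a1) \<cdot> e" using h(2) by simp
    also have "\<dots> = u \<cdot> (x \<cdot> q)" using a e e' by simp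
    finally show ?thesis .
  qed
  obtain n' where n': "arr n'" "Dom C n' = Dom C q" "Cod C n' = Dom C n1" "n1 \<cdot> n' = q" "n2 \<cdot> n' = a2 \<cdot> e"
    by (rule N_liftE[of q "a2 \<cdot> e"]) (use a e e' ua in simp_all)
  have iq: "arr (i \<cdot> q)" "Cod C (i \<cdot> q) = Dom C n1" "Dom C (i \<cdot> q) = Dom C q" using i e e' by simp_all
  have ga: "g \<cdot> a1 = g \<cdot> a2"
  proof -
    have "g \<cdot> a1 = t0 \<cdot> (f \<cdot> a1)" by (rule comp_eq_extend'[OF t0(3), symmetric]) (use t0 a in simp_all)
    also have "\<dots> = t0 \<cdot> (f \<cdot> a2)" using h(1) by simp
    also have "\<dots> = g \<cdot> a2" by (rule comp_eq_extend'[OF t0(3)]) (use t0 a in simp_all)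
    finally show ?thesis .
  qed
  (* (x q, q) and (a2 e, q) have the same image under H = g n2, so they are \<Lambda>-related. *)
  have HH: "H \<cdot> (i \<cdot> q) = H \<cdot> n'"
  proof -
    have "H \<cdot> (i \<cdot> q) = g \<cdot> (n2 \<cdot> (i \<cdot> q))" unfolding Hg by (rule comp_assoc) (use g iq in simp_all)
    also have "\<dots> = g \<cdot> (a1 \<cdot> e)" using diagonal_comm[OF e(3) e'] e(7) by simp
    also have "\<dots> = (g \<cdot> a1) \<cdot> e" using g a e by simp
    also have "\<dots> = (g \<cdot> a2) \<cdot> e" using ga by simp
    also have "\<dots> = g \<cdot> (n2 \<cdot> n')" using g a e n' by simp
    also have "\<dots> = H \<cdot> n'" unfolding Hg by (rule comp_assoc[symmetric]) (use g n' in simp_all)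
    finally show ?thesis .
  qed
  obtain l where l: "arr l" "Dom C l = Dom C (i \<cdot> q)" "Cod C l = Dom C l1" "l1 \<cdot> l = i \<cdot> q" "r2 \<cdot> l = n'"
    by (rule pullback_liftE[OF H iq(1) n'(1)]) (use iq n' HH H_facts in simp_all)
  have "T \<cdot> l = x \<cdot> q"
  proof (rule T_char[OF l(1,3) e(3) e'])
    show "x \<cdot> q = n2 \<cdot> (l1 \<cdot> l)" using l(4) diagonal_comm[OF e(3) e'] by simp
    have "f2 \<cdot> (l2 \<cdot> l) = n1 \<cdot> (r2 \<cdot> l)" using l(1,3) by simp
    then have "f2 \<cdot> (l2 \<cdot> l) = q" using l(5) n'(4) by simp
    then show "u \<cdot> (x \<cdot> q) = u \<cdot> (x \<cdot> (f2 \<cdot> (l2 \<cdot> l)))" by simp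
  qed (use l iq e e' in simp_all)
  moreover have "T \<cdot> l = a2 \<cdot> e"
  proof -
    have "T \<cdot> l = n2 \<cdot> (r2 \<cdot> l)" using l(1,3) by simp
    then show ?thesis using l(5) n'(5) by simp
  qed
  ultimately have "a1 \<cdot> e = a2 \<cdot> e" using e(7) by simp
  then show ?thesis by (rule regular_epi_cancel[OF e(1), rotated -1]) (use a e in simp_all)
qed

end

context pasting_situation
begin

lemma f_u_jointly_monic:
  assumes "arr a1" "arr a2" "Cod C a1 = X" "Cod C a2 = X" "Dom C a1 = Dom C a2"
    and "f \<cdot> a1 = f \<cdot> a2" "u \<cdot> a1 = u \<cdot> a2"
  shows "a1 = a2"
proof -
  obtain n2 n1 where N: "is_pullback C u (u \<cdot> x) n2 n1"
    using pullback_exists[of u "u \<cdot> x"] by auto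
  obtain f1 f2 where F: "is_pullback C (v \<cdot> (y \<cdot> \<phi>)) (v \<cdot> (y \<cdot> \<phi>)) f1 f2"
    using pullback_exists[of "v \<cdot> (y \<cdot> \<phi>)" "v \<cdot> (y \<cdot> \<phi>)"] by auto
  note DN = pullbackD[OF N] and DF = pullbackD[OF F]
  obtain l2 l1 where L: "is_pullback C f1 n1 l2 l1"
    using pullback_exists[of f1 n1] DN DF by auto
  note DL = pullbackD[OF L]
  have "w \<cdot> (u \<cdot> (n2 \<cdot> l1)) = w \<cdot> (u \<cdot> (x \<cdot> (n1 \<cdot> l1)))"
    using pullback_comm[OF N, of l1] DN DL by simp
  also have "\<dots> = v \<cdot> (y \<cdot> (\<phi> \<cdot> (f1 \<cdot> l2)))"
    using DN DL by simp
  also have "\<dots> = v \<cdot> (y \<cdot> (\<phi> \<cdot> (f2 \<cdot> l2)))"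
    using pullback_comm[OF F, of l2] DF DL by simp
  finally have gh: "w \<cdot> (u \<cdot> (n2 \<cdot> l1)) = v \<cdot> (y \<cdot> (\<phi> \<cdot> (f2 \<cdot> l2)))" .
  obtain T where T: "arr T" "Dom C T = Dom C (n2 \<cdot> l1)" "Cod C T = X"
    "u \<cdot> T = u \<cdot> (x \<cdot> (f2 \<cdot> l2))"
    and T_char: "\<And>l q s. arr l \<Longrightarrow> Cod C l = Dom C (n2 \<cdot> l1) \<Longrightarrow> arr q \<Longrightarrow> Cod C q = P \<Longrightarrow>
      Dom C q = Dom C l \<Longrightarrow> x \<cdot> q = (n2 \<cdot> l1) \<cdot> l \<Longrightarrow> arr s \<Longrightarrow> Cod C s = P \<Longrightarrow>
      Dom C s = Dom C l \<Longrightarrow> u \<cdot> (x \<cdot> s) = u \<cdot> (x \<cdot> ((f2 \<cdot> l2) \<cdot> l)) \<Longrightarrow> \<phi> \<cdot> s = \<phi> \<cdot> q \<Longrightarrow>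
      T \<cdot> l = x \<cdot> s"
    by (rule transport_mapE[of "n2 \<cdot> l1" "f2 \<cdot> l2", OF _ _ _ _ _ gh]) (use DN DF DL in simp_all)
  have uT: "u \<cdot> T = (u \<cdot> x) \<cdot> (f2 \<cdot> l2)"
    using T DF DL by simp
  obtain r2 where r2: "arr r2" "Dom C r2 = Dom C T" "Cod C r2 = Dom C n2" "n2 \<cdot> r2 = T"
    "n1 \<cdot> r2 = f2 \<cdot> l2"
    by (rule pullback_liftE[OF N T(1), of "f2 \<cdot> l2", OF _ _ _ _ uT]) (use T DN DF DL in simp_all)
  interpret \<Lambda>: lambda_relation C \<phi> x f y u v w P Z X Y U V n1 n2 f1 f2 l1 l2 T r2
  proof
    fix l q s
    assume "arr l" "Cod C l = Dom C l1" "arr q" "Cod C q = P" "Dom C q = Dom C l"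
      "x \<cdot> q = n2 \<cdot> (l1 \<cdot> l)" "arr s" "Cod C s = P" "Dom C s = Dom C l"
      "u \<cdot> (x \<cdot> s) = u \<cdot> (x \<cdot> (f2 \<cdot> (l2 \<cdot> l)))" "\<phi> \<cdot> s = \<phi> \<cdot> q"
    then show "T \<cdot> l = x \<cdot> s"
      using T_char[of l q s] DN DF DL by simp
  qed (use N F L T r2 DN DL in simp_all)
  obtain H where H: "is_pullback C H H l1 r2"
    by (rule \<Lambda>.Lambda_effectiveE)
  obtain i where i: "arr i" "Dom C i = P" "Cod C i = Dom C n1" "n1 \<cdot> i = P" "n2 \<cdot> i = x"
    by (rule \<Lambda>.N_diagonalE)
  interpret lambda_kernel C \<phi> x f y u v w P Z X Y U V n1 n2 f1 f2 l1 l2 T r2 H i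
    using H i by unfold_locales
  show ?thesis
    by (rule f_u_jointly_monic_of_kernel[OF assms])
qed

lemma left_square_pullback: "is_pullback C f y x \<phi>"
proof (rule pullbackI)
  fix h k assume hk: "arr h" "arr k" "Cod C h = Dom C f" "Cod C k = Dom C y" "Dom C h = Dom C k"
    "f \<cdot> h = y \<cdot> k"
  have "w \<cdot> (u \<cdot> h) = v \<cdot> (y \<cdot> k)"
    using hk by (simp flip: hk(6))
  then obtain t where t: "arr t" "Dom C t = Dom C (u \<cdot> h)" "Cod C t = P" "u \<cdot> (x \<cdot> t) = u \<cdot> h"
    "\<phi> \<cdot> t = k"
    using outer_liftE[of "u \<cdot> h" k] hk by auto
  have "x \<cdot> t = h"
    by (rule f_u_jointly_monic) (use t hk in simp_all)
  then show "\<exists>t. arr t \<and> Dom C t = Dom C h \<and> Cod C t = Dom C x \<and> x \<cdot> t = h \<and> \<phi> \<cdot> t = k"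
    using t hk by auto
next
  fix t t' assume "arr t" "arr t'" "Cod C t = Dom C x" "Cod C t' = Dom C x" "Dom C t = Dom C t'"
    "x \<cdot> t = x \<cdot> t'" "\<phi> \<cdot> t = \<phi> \<cdot> t'"
  then show "t = t'"
    using outer_jointly_monic[of t t'] by simp
qed (simp_all add: left_square)

lemma right_square_pullback: "is_pullback C w v u f"
proof (rule pullbackI)
  fix h k assume hk: "arr h" "arr k" "Cod C h = Dom C w" "Cod C k = Dom C v" "Dom C h = Dom C k"
    "w \<cdot> h = v \<cdot> k"
  obtain e k' where e: "regular_epi C e" "arr e" "arr k'" "Cod C e = Dom C k" "Dom C k' = Dom C e"
    "Cod C k' = Z" "y \<cdot> k' = k \<cdot> e"
    using regular_epi_coverE[OF regular_epi_y hk(2)] hk by auto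
  have "w \<cdot> (h \<cdot> e) = v \<cdot> (y \<cdot> k')"
    using comp_eq_extend[OF hk(6), of e] hk e by simp
  then obtain p where p: "arr p" "Dom C p = Dom C e" "Cod C p = P" "u \<cdot> (x \<cdot> p) = h \<cdot> e"
    "\<phi> \<cdot> p = k'"
    using outer_liftE[of "h \<cdot> e" k'] hk e by auto
  have fxp: "f \<cdot> (x \<cdot> p) = k \<cdot> e"
    using p e by simp
  have fxp_ext: "f \<cdot> (x \<cdot> (p \<cdot> t)) = k \<cdot> (e \<cdot> t)" and uxp_ext: "u \<cdot> (x \<cdot> (p \<cdot> t)) = h \<cdot> (e \<cdot> t)"
    if "arr t" "Cod C t = Dom C e" for t
    using comp_eq_extend[OF fxp, of t] comp_eq_extend[OF p(4), of t] that p e hk by simp_all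
  have descends: "(x \<cdot> p) \<cdot> a = (x \<cdot> p) \<cdot> b"
    if ab: "arr a" "arr b" "Cod C a = Dom C e" "Cod C b = Dom C e" "Dom C a = Dom C b" "e \<cdot> a = e \<cdot> b"
    for a b
  proof -
    have "x \<cdot> (p \<cdot> a) = x \<cdot> (p \<cdot> b)"
      by (rule f_u_jointly_monic) (use ab p e fxp_ext uxp_ext in simp_all)
    then show ?thesis
      using ab p by simp
  qed
  obtain t where t: "arr t" "Dom C t = Cod C e" "Cod C t = X" "t \<cdot> e = x \<cdot> p"
    by (rule regular_epi_descendE[OF e(1), of "x \<cdot> p", OF _ _ descends]) (use p in simp_all)
  have "(u \<cdot> t) \<cdot> e = h \<cdot> e" "(f \<cdot> t) \<cdot> e = k \<cdot> e"
    using t e p fxp by simp_all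
  then have "u \<cdot> t = h" "f \<cdot> t = k"
    by (auto intro: regular_epi_cancel[OF e(1)] simp: t e hk)
  then show "\<exists>t. arr t \<and> Dom C t = Dom C h \<and> Cod C t = Dom C u \<and> u \<cdot> t = h \<and> f \<cdot> t = k"
    using t e hk by auto
next
  fix t t' assume "arr t" "arr t'" "Cod C t = Dom C u" "Cod C t' = Dom C u" "Dom C t = Dom C t'"
    "u \<cdot> t = u \<cdot> t'" "f \<cdot> t = f \<cdot> t'"
  then show "t = t'"
    using f_u_jointly_monic[of t t'] by simp
qed (simp_all add: right_square)

end

theorem proposition4p2:
  fixes C :: "'a cat"
  assumes "almost_exact C" and "gumm C"
    and "\<phi> \<in> hom C P Z" and "x \<in> hom C P X" and "f \<in> hom C X Y" and "y \<in> hom C Z Y"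
    and "u \<in> hom C X U" and "v \<in> hom C Y V" and "w \<in> hom C U V"
    and "Cmp C f x = Cmp C y \<phi>" and "Cmp C w u = Cmp C v f"
    and "regular_epi C \<phi>" and "regular_epi C x" and "regular_epi C f" and "regular_epi C y"
    and "is_pushout C x \<phi> f y"
    and "is_pullback C w (Cmp C v y) (Cmp C u x) \<phi>"
  shows "is_pullback C f y x \<phi> \<and> is_pullback C w v u f"
proof -
  have "regular C" and "category C"
    using assms(1) unfolding almost_exact_def regular_def finitely_complete_def by blast+
  then interpret pasting_situation C \<phi> x f y u v w P Z X Y U V
    using assms by unfold_locales
  show ?thesis
    using left_square_pullback right_square_pullback by blast
qed

end
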